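(* In the setting of the context, for each $t\in\{0,1,\dots,T-1\}$, \[ \mathbb{E}\{P^\ast_{t+1}(Z)\mid A_t,H_t\} = m_t(A_t,H_t). \] Moreover, given fixed nuisance estimates $\{\widehat m_s^\ast,\widehat Q_s\}_{s=t+1}^T$ (with corresponding $\widehat r_s,\widehat\phi_s$) used to construct $\widehat P^\ast_{t+1}(Z)$, \begin{align*} \mathbb{E}\{\widehat P^\ast_{t+1}(Z) - m_t(A_t,H_t)\mid A_t,H_t\} &= \sum_{s=t+1}^T \mathbb{E}\Big[\Big\{\prod_{k=t+1}^{s-1}\widehat r_k(A_k\mid H_k)\Big\}\{m_s(A_s,H_s) - \widehat m_s^\ast(A_s,H_s)\}\{\widehat r_s(A_s\mid H_s) - r_s(A_s\mid H_s)\}\,\Big|\,A_t,H_t\Big]\\ &\quad + \sum_{s=t+1}^T \mathbb{E}\Big[\Big\{\prod_{k=t+1}^{s-1}\widehat r_k(A_k\mid H_k)\Big\}\sum_{b_s}\widehat m_s^\ast(b_s,H_s)\{\widehat Q_s(b_s\mid H_s) + \widehat\phi_s(b_s;A_s,H_s) - Q_s(b_s\mid H_s)\}\,\Big|\,A_t,H_t\Big]. \end{align*}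
   Context: Observed data $Z=(X_1,A_1,\dots,X_T,A_T,Y)\sim\mathbb{P}$, $A_t\in\{0,1\}$, $H_t=(X_1,A_1,\dots,A_{t-1},X_t)$. Fix $\overline a_T\in\{0,1\}^T$ and twice differentiable $s_t:[0,1]\to[0,1]$ with non-zero bounded derivatives $s_t'$; assume $r_t$ is uniformly bounded. $Q_t(a_t\mid H_t)=\mathbb{P}(A_t=a_t\mid H_t)+s_t\{\mathbb{P}(A_t=a_t\mid H_t)\}\{1-\mathbb{P}(A_t=a_t\mid H_t)\}$, $Q_t(1-a_t\mid H_t)=1-Q_t(a_t\mid H_t)$, $r_t(b\mid H_t)=Q_t(b\mid H_t)/\mathbb{P}(A_t=b\mid H_t)$. $\phi_t(b;A_t,H_t)=\{2\mathbf{1}(b=a_t)-1\}\{\mathbf{1}(A_t=a_t)-\mathbb{P}(A_t=a_t\mid H_t)\}[1-s_t\{\mathbb{P}(A_t=a_t\mid H_t)\}+s_t'\{\mathbb{P}(A_t=a_t\mid H_t)\}\{1-\mathbb{P}(A_t=a_t\mid H_t)\}]$. Sequential regressions for the treatment-value parameter: $m_T(0,H_T)=0$, $m_T(1,H_T)=1$, $m_t(A_t,H_t)=\mathbb{E}\{\sum_{b}m_{t+1}(b,H_{t+1})Q_{t+1}(b\mid H_{t+1})\mid A_t,H_t\}$ for $t<T$, with $m_0=\mathbb{E}[Q_T(1\mid H_T)\prod_{t=1}^{T-1}r_t(A_t\mid H_t)]$ (for $t=0$ the conditioning is vacuous). Pseudo-outcomes: $P_T^\ast(Z)=Q_T(1\mid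 H_T)+\phi_T(1;A_T,H_T)$, and for $t=T-1,\dots,1$, $P_t^\ast(Z)=\sum_{b_t}m_t(b_t,H_t)\{Q_t(b_t\mid H_t)+\phi_t(b_t;A_t,H_t)\}+\sum_{s=t}^{T-1}\{\prod_{k=t}^s r_k(A_k\mid H_k)\}[\sum_{b_{s+1}}m_{s+1}(b_{s+1},H_{s+1})\{Q_{s+1}(b_{s+1}\mid H_{s+1})+\phi_{s+1}(b_{s+1};A_{s+1},H_{s+1})\}-m_s(A_s,H_s)]$. $\widehat P^\ast_{t+1}$ is the same expression with $m_s,Q_s,r_s,\phi_s$ ($s\ge t+1$) replaced by $\widehat m_s^\ast,\widehat Q_s,\widehat r_s,\widehat\phi_s$ (the latter three from a propensity estimate), where $\widehat m_T^\ast(b,H_T)=b$. *)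

theory Defs
  imports "HOL-Probability.Probability"
begin

text \<open>
  Paths: a (partial) observed trajectory is a function omega :: nat => 'x * bool,
  where omega k = (X_k, A_k) for time points k = 1,2,...  (A_k = True means A_k = 1).
  A prefix containing (X_1,A_1,...,X_t,A_t), i.e. the data (A_t,H_t), is an element of
  space (PiM {1..t} (%_. N (x) count_space UNIV)).
\<close>

type_synonym 'x path = "nat \<Rightarrow> 'x \<times> bool"

text \<open>H_t = (X_1,A_1,...,A_{t-1},X_t), represented as (first t-1 pairs, X_t).\<close>
definition Hist :: "nat \<Rightarrow> 'x path \<Rightarrow> 'x path \<times> 'x" where
  "Hist t \<omega> = (restrict \<omega> {1..<t}, fst (\<omega> t))"

text \<open>(A_t,H_t) = first t pairs.\<close>
definition prefix :: "nat \<Rightarrow> 'x path \<Rightarrow> 'x path" where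
  "prefix t \<omega> = restrict \<omega> {1..t}"

text \<open>Replace the treatment A_t by the value b (used to evaluate m_t(b,H_t)).\<close>
definition setA :: "nat \<Rightarrow> bool \<Rightarrow> 'x path \<Rightarrow> 'x path" where
  "setA t b \<omega> = fun_upd \<omega> t (fst (\<omega> t), b)"

text \<open>P(A_t = b | H_t), given a propensity pf t = P(A_t = 1 | H_t = .).\<close>
definition propA :: "(nat \<Rightarrow> 'x path \<times> 'x \<Rightarrow> real) \<Rightarrow> nat \<Rightarrow> bool \<Rightarrow> 'x path \<Rightarrow> real" where
  "propA pf t b \<omega> = (if b then pf t (Hist t \<omega>) else 1 - pf t (Hist t \<omega>))"

definition Qf :: "(nat \<Rightarrow> real \<Rightarrow> real) \<Rightarrow> (nat \<Rightarrow> bool) \<Rightarrow> (nat \<Rightarrow> 'x path \<times> 'x \<Rightarrow> real)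
    \<Rightarrow> nat \<Rightarrow> bool \<Rightarrow> 'x path \<Rightarrow> real" where
  "Qf sf abar pf t b \<omega> =
     (let P = propA pf t (abar t) \<omega>; q = P + sf t P * (1 - P)
      in if b = abar t then q else 1 - q)"

definition rf :: "(nat \<Rightarrow> real \<Rightarrow> real) \<Rightarrow> (nat \<Rightarrow> bool) \<Rightarrow> (nat \<Rightarrow> 'x path \<times> 'x \<Rightarrow> real)
    \<Rightarrow> nat \<Rightarrow> bool \<Rightarrow> 'x path \<Rightarrow> real" where
  "rf sf abar pf t b \<omega> = Qf sf abar pf t b \<omega> / propA pf t b \<omega>"

definition phif :: "(nat \<Rightarrow> real \<Rightarrow> real) \<Rightarrow> (nat \<Rightarrow> real \<Rightarrow> real) \<Rightarrow> (nat \<Rightarrow> bool)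
    \<Rightarrow> (nat \<Rightarrow> 'x path \<times> 'x \<Rightarrow> real) \<Rightarrow> nat \<Rightarrow> bool \<Rightarrow> 'x path \<Rightarrow> real" where
  "phif sf sf' abar pf t b \<omega> =
     (let P = propA pf t (abar t) \<omega>
      in (2 * of_bool (b = abar t) - 1) * (of_bool (snd (\<omega> t) = abar t) - P)
         * (1 - sf t P + sf' t P * (1 - P)))"

text \<open>Pseudo-outcome P_t^*(Z), built from regression functions mf and propensity pf
  (mf s applied to a prefix of s pairs gives m_s(A_s,H_s)).\<close>
definition Pstar :: "nat \<Rightarrow> (nat \<Rightarrow> real \<Rightarrow> real) \<Rightarrow> (nat \<Rightarrow> real \<Rightarrow> real) \<Rightarrow> (nat \<Rightarrow> bool)
    \<Rightarrow> (nat \<Rightarrow> 'x path \<times> 'x \<Rightarrow> real) \<Rightarrow> (nat \<Rightarrow> 'x path \<Rightarrow> real) \<Rightarrow> nat \<Rightarrow> 'x path \<Rightarrow> real" where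
  "Pstar T sf sf' abar pf mf t \<omega> =
     (if t = T then Qf sf abar pf T True \<omega> + phif sf sf' abar pf T True \<omega>
      else (\<Sum>b\<in>UNIV. mf t (prefix t (setA t b \<omega>))
                 * (Qf sf abar pf t b \<omega> + phif sf sf' abar pf t b \<omega>))
         + (\<Sum>s\<in>{t..T-1}. (\<Prod>k\<in>{t..s}. rf sf abar pf k (snd (\<omega> k)) \<omega>)
              * ((\<Sum>b\<in>UNIV. mf (Suc s) (prefix (Suc s) (setA (Suc s) b \<omega>))
                    * (Qf sf abar pf (Suc s) b \<omega> + phif sf sf' abar pf (Suc s) b \<omega>))
                 - mf s (prefix s \<omega>))))"

text \<open>Conditional expectation E{ f(Z) | A_t, H_t } evaluated at the prefix h (t pairs),
  for the law of Z given sequentially by the kernels kappa t (law of X_t given the first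
  t-1 pairs) and the propensities p t (P(A_t = 1 | H_t)).  For t = 0 it is E f(Z).\<close>
function condE :: "nat \<Rightarrow> (nat \<Rightarrow> 'x path \<Rightarrow> 'x measure) \<Rightarrow> (nat \<Rightarrow> 'x path \<times> 'x \<Rightarrow> real)
    \<Rightarrow> ('x path \<Rightarrow> real) \<Rightarrow> nat \<Rightarrow> 'x path \<Rightarrow> real" where
  "condE T \<kappa> p f t h =
     (if T \<le> t then f h
      else \<integral>x. (p (Suc t) (h, x) * condE T \<kappa> p f (Suc t) (fun_upd h (Suc t) (x, True))
               + (1 - p (Suc t) (h, x)) * condE T \<kappa> p f (Suc t) (fun_upd h (Suc t) (x, False)))
           \<partial>(\<kappa> (Suc t) h))"
  by auto
termination by (relation "Wellfounded.measure (\<lambda>(T, \<kappa>, p, f, t, h). T - t)") auto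

function mtrue :: "nat \<Rightarrow> (nat \<Rightarrow> 'x path \<Rightarrow> 'x measure) \<Rightarrow> (nat \<Rightarrow> 'x path \<times> 'x \<Rightarrow> real)
    \<Rightarrow> (nat \<Rightarrow> real \<Rightarrow> real) \<Rightarrow> (nat \<Rightarrow> bool) \<Rightarrow> nat \<Rightarrow> 'x path \<Rightarrow> real" where
  "mtrue T \<kappa> p sf abar t h =
     (if T \<le> t then of_bool (snd (h T))
      else condE T \<kappa> p
             (\<lambda>\<omega>. \<Sum>b\<in>UNIV. mtrue T \<kappa> p sf abar (Suc t) (prefix (Suc t) (setA (Suc t) b \<omega>))
                           * Qf sf abar p (Suc t) b \<omega>) t h)"
  by auto
termination by (relation "Wellfounded.measure (\<lambda>(T, \<kappa>, p, sf, abar, t, h). T - t)") auto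

end

theory Submission
  imports Defs
begin

text \<open>
  Everything follows from the tower property of the sequential conditional expectation
  \<open>condE\<close> and two one-step facts about the treatment \<open>A_s\<close> given \<open>H_s\<close>: the correction
  \<open>phi_s\<close> has conditional mean zero, and the weight \<open>r_s = Q_s / P(A_s | H_s)\<close> turns the
  average over \<open>A_s\<close> into the \<open>Q_s\<close>-weighted sum over \<open>b\<close>.  Hence
  \<open>E[sum_b m_s(b, H_s) (Q_s + phi_s)(b) | A_(s-1), H_(s-1)] = m_(s-1)\<close>, so every correction term of
  \<open>P*_(t+1)\<close> has conditional mean zero.

  For the estimated pseudo-outcome, summation by parts writes \<open>Phat_(t+1) - m_t\<close> as
  \<open>sum_s R_s [rhat_s (m_s - mhat_s) + sum_b mhat_s(b) (Qhat_s + phihat_s)(b) - m_(s-1)]\<close> with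
  \<open>R_s = prod_(t<k<s) rhat_k\<close>.  Adding and subtracting \<open>r_s (m_s - mhat_s)\<close> and
  \<open>sum_b mhat_s(b) Q_s(b)\<close> splits each summand into the two remainder terms of the statement and
  \<open>R_s\<close> times an increment whose conditional mean given \<open>(A_(s-1), H_(s-1))\<close> vanishes by the
  same two one-step facts.
\<close>

lemma integral_measurable_subprob_algebra2:
  fixes f :: "_ \<Rightarrow> _ \<Rightarrow> real"
  assumes f[measurable]: "(\<lambda>(x, y). f x y) \<in> borel_measurable (M \<Otimes>\<^sub>M N)"
    and L[measurable]: "L \<in> measurable M (subprob_algebra N)"
  shows "(\<lambda>x. integral\<^sup>L (L x) (f x)) \<in> borel_measurable M"
proof -
  note integral_measurable_subprob_algebra[measurable] measurable_distr2[measurable]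
  have "(\<lambda>x. integral\<^sup>L (distr (L x) (M \<Otimes>\<^sub>M N) (\<lambda>y. (x, y))) (\<lambda>(x, y). f x y)) \<in> borel_measurable M"
    by measurable
  then show ?thesis
  proof (rule measurable_cong[THEN iffD1, rotated])
    fix x assume x: "x \<in> space M"
    have sets: "sets (L x) = sets N"
      using measurable_space[OF L x] by (simp add: space_subprob_algebra)
    have Pair: "(\<lambda>y. (x, y)) \<in> measurable (L x) (M \<Otimes>\<^sub>M N)"
      unfolding measurable_cong_sets[OF sets refl] using x by (rule measurable_Pair1')
    show "integral\<^sup>L (distr (L x) (M \<Otimes>\<^sub>M N) (Pair x)) (\<lambda>(x, y). f x y) = integral\<^sup>L (L x) (f x)"
      using integral_distr[OF Pair f] by simp
  qed
qed

lemma borel_measurable_continuous_on_comp: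
  fixes g :: "'a::topological_space \<Rightarrow> 'b::topological_space"
  assumes g: "continuous_on A g" and f: "f \<in> borel_measurable M"
    and range: "\<And>\<omega>. \<omega> \<in> space M \<Longrightarrow> f \<omega> \<in> A"
  shows "(\<lambda>\<omega>. g (f \<omega>)) \<in> borel_measurable M"
proof -
  have "f \<in> measurable M (restrict_space borel A)"
    using range f by (intro measurable_restrict_space2) auto
  from this borel_measurable_continuous_on_restrict[OF g] have "g \<circ> f \<in> borel_measurable M"
    by (rule measurable_comp)
  then show ?thesis by (simp add: comp_def)
qed

lemma abs_convex_combination_le:
  fixes p a b B :: real
  assumes "0 \<le> p" "p \<le> 1" "\<bar>a\<bar> \<le> B" "\<bar>b\<bar> \<le> B"
  shows "\<bar>p * a + (1 - p) * b\<bar> \<le> B"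
proof -
  have "\<bar>p * a + (1 - p) * b\<bar> \<le> p * \<bar>a\<bar> + (1 - p) * \<bar>b\<bar>"
    using assms(1,2) abs_triangle_ineq[of "p * a" "(1 - p) * b"] by (simp add: abs_mult)
  also have "\<dots> \<le> p * B + (1 - p) * B"
    using assms by (intro add_mono mult_left_mono) auto
  finally show ?thesis by (simp add: algebra_simps)
qed

lemma weighted_telescoping:
  fixes R r V m mh :: "nat \<Rightarrow> real"
  assumes "u \<le> n" "R u = 1" "\<And>s. u \<le> s \<Longrightarrow> R (Suc s) = R s * r s"
  shows "V u + (\<Sum>s\<in>{u..<n}. R (Suc s) * (V (Suc s) - mh s)) - m (u - 1)
           + R (Suc n) * (m n - mh n)
       = (\<Sum>s\<in>{u..n}. R s * ((m s - mh s) * r s + V s - m (s - 1)))"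
  using assms(1)
proof (induction rule: dec_induct)
  case base
  then show ?case using assms(2) assms(3)[of u] by (simp add: algebra_simps)
next
  case (step n)
  have R: "R (Suc (Suc n)) = R (Suc n) * r (Suc n)"
    using assms(3) step(1) by auto
  have "(\<Sum>s\<in>{u..Suc n}. R s * ((m s - mh s) * r s + V s - m (s - 1)))
      = (\<Sum>s\<in>{u..n}. R s * ((m s - mh s) * r s + V s - m (s - 1)))
        + R (Suc n) * ((m (Suc n) - mh (Suc n)) * r (Suc n) + V (Suc n) - m n)"
    using step(1) by simp
  moreover have "(\<Sum>s\<in>{u..<Suc n}. R (Suc s) * (V (Suc s) - mh s))
      = (\<Sum>s\<in>{u..<n}. R (Suc s) * (V (Suc s) - mh s)) + R (Suc n) * (V (Suc n) - mh n)"
    using step(1) by simp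
  ultimately show ?case using step(3) R by (simp add: algebra_simps)
qed

declare condE.simps[simp del] mtrue.simps[simp del]

lemma prefix_prefix: "k \<le> s \<Longrightarrow> prefix k (prefix s \<omega>) = prefix k \<omega>"
  by (auto simp: prefix_def restrict_def fun_eq_iff)

lemma prefix_fun_upd: "s \<le> t \<Longrightarrow> prefix s (h(Suc t := v)) = prefix s h"
  by (auto simp: prefix_def restrict_def fun_eq_iff)

lemma prefix_setA_prefix: "k \<le> s \<Longrightarrow> prefix k (setA k b (prefix s \<omega>)) = prefix k (setA k b \<omega>)"
  by (auto simp: prefix_def setA_def restrict_def fun_eq_iff)

lemma Hist_prefix: "k \<in> {1..s} \<Longrightarrow> Hist k (prefix s \<omega>) = Hist k \<omega>"
  by (auto simp: Hist_def prefix_def restrict_def fun_eq_iff)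

lemma propA_prefix: "k \<in> {1..s} \<Longrightarrow> propA pf k b (prefix s \<omega>) = propA pf k b \<omega>"
  by (simp add: propA_def Hist_prefix)

lemma prefix_apply: "k \<in> {1..s} \<Longrightarrow> prefix s \<omega> k = \<omega> k"
  by (simp add: prefix_def)

definition adapted :: "nat \<Rightarrow> ('x path \<Rightarrow> 'a) \<Rightarrow> bool" where
  "adapted s F \<longleftrightarrow> (\<forall>\<omega>. F \<omega> = F (prefix s \<omega>))"

lemma adaptedI: "(\<And>\<omega>. F (prefix s \<omega>) = F \<omega>) \<Longrightarrow> adapted s F"
  by (simp add: adapted_def)

lemma adaptedD: "adapted s F \<Longrightarrow> F (prefix s \<omega>) = F \<omega>"
  by (metis adapted_def)

lemma adapted_prefix_comp: "adapted s (\<lambda>\<omega>. g (prefix s \<omega>))"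
  by (simp add: adapted_def prefix_prefix)

lemma adapted_fun_upd: "adapted s F \<Longrightarrow> s \<le> t \<Longrightarrow> F (h(Suc t := v)) = F h"
  unfolding adapted_def by (metis prefix_fun_upd)

definition treatment_sum :: "(nat \<Rightarrow> 'x path \<Rightarrow> real) \<Rightarrow> nat \<Rightarrow> (bool \<Rightarrow> 'x path \<Rightarrow> real)
    \<Rightarrow> 'x path \<Rightarrow> real" where
  "treatment_sum m s w \<omega> = (\<Sum>b\<in>UNIV. m s (prefix s (setA s b \<omega>)) * w b \<omega>)"

lemma adapted_treatment_sum: "1 \<le> s \<Longrightarrow> (\<And>b. adapted s (w b)) \<Longrightarrow> adapted s (treatment_sum m s w)"
  by (intro adaptedI) (simp add: treatment_sum_def prefix_setA_prefix adaptedD)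

locale sequential_model =
  fixes T :: nat and N :: "'x measure" and \<kappa> :: "nat \<Rightarrow> 'x path \<Rightarrow> 'x measure"
    and p :: "nat \<Rightarrow> 'x path \<times> 'x \<Rightarrow> real"
  assumes kernel: "\<And>t. t \<in> {1..T} \<Longrightarrow>
      \<kappa> t \<in> measurable (PiM {1..<t} (\<lambda>_. N \<Otimes>\<^sub>M count_space UNIV)) (prob_algebra N)"
    and p_meas: "\<And>t. t \<in> {1..T} \<Longrightarrow>
      p t \<in> borel_measurable (PiM {1..<t} (\<lambda>_. N \<Otimes>\<^sub>M count_space UNIV) \<Otimes>\<^sub>M N)"
    and p_range: "\<And>t hx. t \<in> {1..T} \<Longrightarrow>
      hx \<in> space (PiM {1..<t} (\<lambda>_. N \<Otimes>\<^sub>M count_space UNIV) \<Otimes>\<^sub>M N) \<Longrightarrow> 0 \<le> p t hx \<and> p t hx \<le> 1"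
begin

abbreviation S :: "('x \<times> bool) measure" where
  "S \<equiv> N \<Otimes>\<^sub>M count_space UNIV"

abbreviation Tr :: "nat \<Rightarrow> 'x path measure" where
  "Tr t \<equiv> PiM {1..t} (\<lambda>_. S)"

abbreviation \<Omega> :: "nat \<Rightarrow> 'x path set" where
  "\<Omega> t \<equiv> space (Tr t)"

abbreviation CE :: "('x path \<Rightarrow> real) \<Rightarrow> nat \<Rightarrow> 'x path \<Rightarrow> real" where
  "CE f t h \<equiv> condE T \<kappa> p f t h"

lemma mem_space_PiM_S_iff:
  "h \<in> space (PiM I (\<lambda>_. S)) \<longleftrightarrow> (\<forall>i\<in>I. fst (h i) \<in> space N) \<and> (\<forall>i. i \<notin> I \<longrightarrow> h i = undefined)"
  by (auto simp: space_PiM PiE_def Pi_def extensional_def space_pair_measure mem_Times_iff)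

lemma fun_upd_in_\<Omega>: "h \<in> \<Omega> t \<Longrightarrow> x \<in> space N \<Longrightarrow> h(Suc t := (x, b)) \<in> \<Omega> (Suc t)"
  unfolding mem_space_PiM_S_iff by auto

lemma prefix_eq_self: "h \<in> \<Omega> t \<Longrightarrow> prefix t h = h"
  unfolding mem_space_PiM_S_iff by (auto simp: prefix_def restrict_def fun_eq_iff)

lemma prefix_in_\<Omega>: "\<omega> \<in> \<Omega> t \<Longrightarrow> s \<le> t \<Longrightarrow> prefix s \<omega> \<in> \<Omega> s"
  unfolding mem_space_PiM_S_iff by (auto simp: prefix_def)

lemma prefix_setA_in_\<Omega>: "\<omega> \<in> \<Omega> t \<Longrightarrow> s \<in> {1..t} \<Longrightarrow> prefix s (setA s b \<omega>) \<in> \<Omega> s"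
  unfolding mem_space_PiM_S_iff by (auto simp: prefix_def setA_def)

lemma prefix_Suc_fun_upd: "h \<in> \<Omega> t \<Longrightarrow> prefix (Suc t) (h(Suc t := v)) = h(Suc t := v)"
  unfolding mem_space_PiM_S_iff by (auto simp: prefix_def restrict_def fun_eq_iff)

lemma prefix_setA_fun_upd:
  "h \<in> \<Omega> t \<Longrightarrow> prefix (Suc t) (setA (Suc t) b (h(Suc t := (x, a)))) = h(Suc t := (x, b))"
  unfolding mem_space_PiM_S_iff by (auto simp: prefix_def setA_def restrict_def fun_eq_iff)

lemma Hist_fun_upd: "h \<in> \<Omega> t \<Longrightarrow> Hist (Suc t) (h(Suc t := (x, a))) = (h, x)"
  unfolding mem_space_PiM_S_iff by (auto simp: Hist_def restrict_def fun_eq_iff)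

lemma propA_fun_upd: "h \<in> \<Omega> t \<Longrightarrow>
    propA pf (Suc t) b (h(Suc t := (x, a))) = (if b then pf (Suc t) (h, x) else 1 - pf (Suc t) (h, x))"
  by (simp add: propA_def Hist_fun_upd)

lemma extend_to_\<Omega>:
  assumes "\<omega> \<in> \<Omega> s" "s \<le> t" "x \<in> space N"
  shows "\<exists>\<omega>'\<in>\<Omega> t. prefix s \<omega>' = \<omega>"
proof
  define \<omega>' where "\<omega>' i = (if i \<in> {1..s} then \<omega> i else if i \<in> {1..t} then (x, True) else undefined)" for i
  show "\<omega>' \<in> \<Omega> t"
    using assms unfolding mem_space_PiM_S_iff \<omega>'_def by auto
  show "prefix s \<omega>' = \<omega>"
    using assms unfolding mem_space_PiM_S_iff \<omega>'_def by (auto simp: prefix_def fun_eq_iff)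
qed

lemma kernel_measurable: "t < T \<Longrightarrow> \<kappa> (Suc t) \<in> measurable (Tr t) (prob_algebra N)"
  using kernel[of "Suc t"] by (simp add: atLeastLessThanSuc_atLeastAtMost)

lemma kernel_subprob_measurable: "t < T \<Longrightarrow> \<kappa> (Suc t) \<in> measurable (Tr t) (subprob_algebra N)"
  by (rule measurable_prob_algebraD[OF kernel_measurable])

lemma
  assumes "t < T" "h \<in> \<Omega> t"
  shows kernel_prob_space: "prob_space (\<kappa> (Suc t) h)"
    and space_kernel: "space (\<kappa> (Suc t) h) = space N"
    and sets_kernel: "sets (\<kappa> (Suc t) h) = sets N"
proof -
  have "\<kappa> (Suc t) h \<in> space (prob_algebra N)"
    using measurable_space[OF kernel_measurable assms(2)] assms(1) .
  then show "prob_space (\<kappa> (Suc t) h)" and sets: "sets (\<kappa> (Suc t) h) = sets N"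
    by (auto simp: space_prob_algebra)
  show "space (\<kappa> (Suc t) h) = space N"
    using sets_eq_imp_space_eq[OF sets] .
qed

lemma p_measurable: "t < T \<Longrightarrow> p (Suc t) \<in> borel_measurable (Tr t \<Otimes>\<^sub>M N)"
  using p_meas[of "Suc t"] by (simp add: atLeastLessThanSuc_atLeastAtMost)

lemma p_bounds: "t < T \<Longrightarrow> h \<in> \<Omega> t \<Longrightarrow> x \<in> space N \<Longrightarrow> 0 \<le> p (Suc t) (h, x) \<and> p (Suc t) (h, x) \<le> 1"
  using p_range[of "Suc t" "(h, x)"] by (simp add: atLeastLessThanSuc_atLeastAtMost space_pair_measure)

definition treatment_avg :: "nat \<Rightarrow> 'x path \<Rightarrow> 'x \<Rightarrow> ('x path \<Rightarrow> real) \<Rightarrow> real" where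
  "treatment_avg t h x F = p (Suc t) (h, x) * F (h(Suc t := (x, True)))
     + (1 - p (Suc t) (h, x)) * F (h(Suc t := (x, False)))"

lemma treatment_avg_add:
  "treatment_avg t h x (\<lambda>\<omega>. F \<omega> + G \<omega>) = treatment_avg t h x F + treatment_avg t h x G"
  by (simp add: treatment_avg_def algebra_simps)

lemma treatment_avg_diff:
  "treatment_avg t h x (\<lambda>\<omega>. F \<omega> - G \<omega>) = treatment_avg t h x F - treatment_avg t h x G"
  by (simp add: treatment_avg_def algebra_simps)

lemma treatment_avg_prefix_comp:
  "treatment_avg t h x (\<lambda>\<omega>. g (prefix t \<omega>)) = g (prefix t h)"
  by (simp add: treatment_avg_def prefix_fun_upd algebra_simps)

lemma treatment_avg_treatment_sum:
  "h \<in> \<Omega> t \<Longrightarrow> treatment_avg t h x (treatment_sum m (Suc t) w)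
     = (\<Sum>b\<in>UNIV. m (Suc t) (h(Suc t := (x, b))) * treatment_avg t h x (w b))"
  by (simp add: treatment_avg_def treatment_sum_def prefix_setA_fun_upd UNIV_bool algebra_simps)

lemma treatment_avg_cong:
  assumes "\<And>h'. h' \<in> \<Omega> (Suc t) \<Longrightarrow> F h' = G h'" "h \<in> \<Omega> t" "x \<in> space N"
  shows "treatment_avg t h x F = treatment_avg t h x G"
proof -
  have "F (h(Suc t := (x, b))) = G (h(Suc t := (x, b)))" for b
    using assms(1) fun_upd_in_\<Omega>[OF assms(2,3)] by blast
  then show ?thesis by (simp add: treatment_avg_def)
qed

lemma treatment_avg_mult_adapted:
  "adapted s G \<Longrightarrow> s \<le> t \<Longrightarrow> treatment_avg t h x (\<lambda>\<omega>. G \<omega> * F \<omega>) = G h * treatment_avg t h x F"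
  by (simp add: treatment_avg_def adapted_fun_upd algebra_simps)

lemma treatment_avg_adapted: "adapted s F \<Longrightarrow> s \<le> t \<Longrightarrow> treatment_avg t h x F = F h"
  using treatment_avg_mult_adapted[of s F t h x "\<lambda>_. 1"] by (simp add: treatment_avg_def)

lemma condE_terminal: "T \<le> t \<Longrightarrow> CE f t h = f h"
  by (subst condE.simps) simp

lemma condE_step: "t < T \<Longrightarrow> CE f t h = (\<integral>x. treatment_avg t h x (CE f (Suc t)) \<partial>\<kappa> (Suc t) h)"
  by (subst condE.simps) (simp add: treatment_avg_def)

lemma condE_step_cong:
  assumes "t < T" "h \<in> \<Omega> t" "\<And>h'. h' \<in> \<Omega> (Suc t) \<Longrightarrow> CE f (Suc t) h' = g h'"
  shows "CE f t h = (\<integral>x. treatment_avg t h x g \<partial>\<kappa> (Suc t) h)"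
  unfolding condE_step[OF assms(1)] using assms
  by (intro Bochner_Integration.integral_cong refl treatment_avg_cong) (auto simp: space_kernel)

lemma condE_cong:
  assumes "\<And>\<omega>. \<omega> \<in> \<Omega> T \<Longrightarrow> f \<omega> = g \<omega>" "t \<le> T" "h \<in> \<Omega> t"
  shows "CE f t h = CE g t h"
  using assms(2,3)
proof (induction t arbitrary: h rule: inc_induct)
  case base
  then show ?case using assms(1) by (simp add: condE_terminal)
next
  case (step n)
  then show ?case
    using condE_step_cong[of n h f "CE g (Suc n)"] by (simp add: condE_step[OF step.hyps(2)])
qed

lemma condE_adapted:
  assumes F: "adapted s F" and "s \<le> t" "t \<le> T" "h \<in> \<Omega> t"
  shows "CE F t h = F h"
  using assms(3,4,2)
proof (induction t arbitrary: h rule: inc_induct)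
  case base
  then show ?case by (simp add: condE_terminal)
next
  case (step n)
  interpret prob_space "\<kappa> (Suc n) h"
    by (rule kernel_prob_space[OF step.hyps(2) step.prems(1)])
  have "CE F n h = (\<integral>x. treatment_avg n h x F \<partial>\<kappa> (Suc n) h)"
    using step by (intro condE_step_cong) auto
  then show ?case
    using step.prems by (simp add: treatment_avg_adapted[OF F] prob_space)
qed

lemma condE_const: "t \<le> T \<Longrightarrow> h \<in> \<Omega> t \<Longrightarrow> CE (\<lambda>_. c) t h = c"
  by (rule condE_adapted[of 0]) (simp_all add: adapted_def)

lemma condE_mult_adapted:
  assumes G: "adapted s G" and "s \<le> t" "t \<le> T" "h \<in> \<Omega> t"
  shows "CE (\<lambda>\<omega>. G \<omega> * f \<omega>) t h = G h * CE f t h"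
  using assms(3,4,2)
proof (induction t arbitrary: h rule: inc_induct)
  case base
  then show ?case by (simp add: condE_terminal)
next
  case (step n)
  have "CE (\<lambda>\<omega>. G \<omega> * f \<omega>) n h
      = (\<integral>x. treatment_avg n h x (\<lambda>\<omega>. G \<omega> * CE f (Suc n) \<omega>) \<partial>\<kappa> (Suc n) h)"
    using step by (intro condE_step_cong) auto
  then show ?case
    using step.prems by (simp add: treatment_avg_mult_adapted[OF G] condE_step[OF step.hyps(2)])
qed

lemma condE_tower:
  assumes "t \<le> s" "s \<le> T" "h \<in> \<Omega> t"
  shows "CE f t h = CE (\<lambda>\<omega>. CE f s (prefix s \<omega>)) t h"
  using assms(1,3)
proof (induction t arbitrary: h rule: inc_induct)
  case base
  then show ?case
    using condE_adapted[OF adapted_prefix_comp order.refl assms(2)] by (simp add: prefix_eq_self)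
next
  case (step n)
  have n: "n < T" using step.hyps(2) assms(2) by simp
  with step show ?case
    using condE_step_cong[of n h f "CE (\<lambda>\<omega>. CE f s (prefix s \<omega>)) (Suc n)"] by (simp add: condE_step[OF n])
qed

lemma condE_tower_eq_0:
  assumes "t \<le> s" "s \<le> T" "\<And>h'. h' \<in> \<Omega> s \<Longrightarrow> CE f s h' = 0" "h \<in> \<Omega> t"
  shows "CE f t h = 0"
proof -
  have "CE f t h = CE (\<lambda>\<omega>. CE f s (prefix s \<omega>)) t h"
    by (rule condE_tower[OF assms(1,2,4)])
  also have "\<dots> = CE (\<lambda>_. 0) t h"
    using assms(1,2,4) assms(3)[OF prefix_in_\<Omega>] by (intro condE_cong) auto
  finally show ?thesis
    using assms by (simp add: condE_const)
qed

lemma condE_mult_adapted_eq_0: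
  assumes "adapted s G" "t \<le> s" "s \<le> T" "\<And>h'. h' \<in> \<Omega> s \<Longrightarrow> CE f s h' = 0" "h \<in> \<Omega> t"
  shows "CE (\<lambda>\<omega>. G \<omega> * f \<omega>) t h = 0"
  using assms by (intro condE_tower_eq_0[of t s]) (simp_all add: condE_mult_adapted)

lemma condE_eq_by_treatment_avg:
  assumes "t < T" "adapted (Suc t) F1" "adapted (Suc t) F2" "h \<in> \<Omega> t"
    and "\<And>x. x \<in> space N \<Longrightarrow> treatment_avg t h x F1 = treatment_avg t h x F2"
  shows "CE F1 t h = CE F2 t h"
proof -
  have "CE F (Suc t) h' = F h'" if "adapted (Suc t) F" "h' \<in> \<Omega> (Suc t)" for F h'
    using that assms(1) by (intro condE_adapted[of "Suc t"]) auto
  then have "CE F t h = (\<integral>x. treatment_avg t h x F \<partial>\<kappa> (Suc t) h)" if "adapted (Suc t) F" for F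
    using that assms(1,4) by (intro condE_step_cong) auto
  moreover have "(\<integral>x. treatment_avg t h x F1 \<partial>\<kappa> (Suc t) h) = (\<integral>x. treatment_avg t h x F2 \<partial>\<kappa> (Suc t) h)"
    using assms(5) by (intro Bochner_Integration.integral_cong) (simp_all add: space_kernel[OF assms(1,4)])
  ultimately show ?thesis
    using assms(2,3) by simp
qed

lemma
  assumes "k \<in> {1..t}"
  shows measurable_component_fst: "(\<lambda>\<omega>. fst (\<omega> k)) \<in> measurable (Tr t) N"
    and measurable_component_snd: "(\<lambda>\<omega>. snd (\<omega> k)) \<in> measurable (Tr t) (count_space UNIV)"
proof -
  have "(\<lambda>\<omega>. \<omega> k) \<in> measurable (Tr t) S"
    using assms by (rule measurable_component_singleton)
  from this measurable_fst show "(\<lambda>\<omega>. fst (\<omega> k)) \<in> measurable (Tr t) N"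
    by (rule measurable_compose)
  from \<open>(\<lambda>\<omega>. \<omega> k) \<in> measurable (Tr t) S\<close> measurable_snd
  show "(\<lambda>\<omega>. snd (\<omega> k)) \<in> measurable (Tr t) (count_space UNIV)"
    by (rule measurable_compose)
qed

lemma fun_upd_measurable:
  "(\<lambda>(h, x). h(Suc t := (x, b))) \<in> measurable (Tr t \<Otimes>\<^sub>M N) (Tr (Suc t))"
proof -
  have meas: "(\<lambda>hx. \<lambda>i. if i = Suc t then (snd hx, b) else fst hx i) \<in> measurable (Tr t \<Otimes>\<^sub>M N) (Tr (Suc t))"
  proof (rule measurable_PiM_single')
    fix i :: nat assume i: "i \<in> {1..Suc t}"
    show "(\<lambda>hx. if i = Suc t then (snd hx, b) else fst hx i) \<in> measurable (Tr t \<Otimes>\<^sub>M N) S"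
    proof (cases "i = Suc t")
      case True
      then show ?thesis by simp
    next
      case False
      then have "i \<in> {1..t}" using i by auto
      then have "(\<lambda>hx. fst hx i) \<in> measurable (Tr t \<Otimes>\<^sub>M N) S"
        using measurable_comp[OF measurable_fst measurable_component_singleton] by (simp add: comp_def)
      then show ?thesis using False by simp
    qed
  next
    show "(\<lambda>hx i. if i = Suc t then (snd hx, b) else fst hx i)
        \<in> space (Tr t \<Otimes>\<^sub>M N) \<rightarrow> (\<Pi>\<^sub>E i\<in>{1..Suc t}. space S)"
    proof
      fix hx assume "hx \<in> space (Tr t \<Otimes>\<^sub>M N)"
      then obtain h x where hx: "hx = (h, x)" "h \<in> \<Omega> t" "x \<in> space N"
        by (auto simp: space_pair_measure)
      have "(\<lambda>i. if i = Suc t then (snd hx, b) else fst hx i) = h(Suc t := (x, b))"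
        using hx by (auto simp: fun_eq_iff)
      then show "(\<lambda>i. if i = Suc t then (snd hx, b) else fst hx i) \<in> (\<Pi>\<^sub>E i\<in>{1..Suc t}. space S)"
        using fun_upd_in_\<Omega>[OF hx(2,3)] by (simp add: space_PiM)
    qed
  qed
  have eq: "(\<lambda>(h, x). h(Suc t := (x, b))) = (\<lambda>hx. \<lambda>i. if i = Suc t then (snd hx, b) else fst hx i)"
    by (auto simp: fun_eq_iff)
  show ?thesis
    unfolding eq by (rule meas)
qed

definition bounded_measurable :: "nat \<Rightarrow> ('x path \<Rightarrow> real) \<Rightarrow> bool" where
  "bounded_measurable t f \<longleftrightarrow> f \<in> borel_measurable (Tr t) \<and> (\<exists>B. \<forall>h\<in>\<Omega> t. \<bar>f h\<bar> \<le> B)"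

lemma bounded_measurable_measurable: "bounded_measurable t f \<Longrightarrow> f \<in> borel_measurable (Tr t)"
  by (simp add: bounded_measurable_def)

lemma bounded_measurableE:
  assumes "bounded_measurable t f"
  obtains B where "0 \<le> B" "\<And>h. h \<in> \<Omega> t \<Longrightarrow> \<bar>f h\<bar> \<le> B"
proof -
  obtain B where "\<forall>h\<in>\<Omega> t. \<bar>f h\<bar> \<le> B" using assms by (auto simp: bounded_measurable_def)
  then show ?thesis using that[of "max B 0"] by force
qed

lemma bounded_measurable_const: "bounded_measurable t (\<lambda>_. c)"
  unfolding bounded_measurable_def by auto

lemma bounded_measurable_add:
  assumes f: "bounded_measurable t f" and g: "bounded_measurable t g"
  shows "bounded_measurable t (\<lambda>\<omega>. f \<omega> + g \<omega>)"
proof -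
  obtain A B where "\<And>h. h \<in> \<Omega> t \<Longrightarrow> \<bar>f h\<bar> \<le> A" "\<And>h. h \<in> \<Omega> t \<Longrightarrow> \<bar>g h\<bar> \<le> B"
    using bounded_measurableE[OF f] bounded_measurableE[OF g] by metis
  then have "\<forall>h\<in>\<Omega> t. \<bar>f h + g h\<bar> \<le> A + B"
    by (meson abs_triangle_ineq add_mono order_trans)
  then show ?thesis using f g by (auto simp: bounded_measurable_def)
qed

lemma bounded_measurable_mult:
  assumes f: "bounded_measurable t f" and g: "bounded_measurable t g"
  shows "bounded_measurable t (\<lambda>\<omega>. f \<omega> * g \<omega>)"
proof -
  obtain A B where "0 \<le> A" "\<And>h. h \<in> \<Omega> t \<Longrightarrow> \<bar>f h\<bar> \<le> A" "0 \<le> B" "\<And>h. h \<in> \<Omega> t \<Longrightarrow> \<bar>g h\<bar> \<le> B"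
    using bounded_measurableE[OF f] bounded_measurableE[OF g] by metis
  then have "\<forall>h\<in>\<Omega> t. \<bar>f h * g h\<bar> \<le> A * B"
    by (simp add: abs_mult mult_mono)
  then show ?thesis using f g by (auto simp: bounded_measurable_def)
qed

lemma bounded_measurable_diff:
  assumes "bounded_measurable t f" "bounded_measurable t g"
  shows "bounded_measurable t (\<lambda>\<omega>. f \<omega> - g \<omega>)"
  using bounded_measurable_add[OF assms(1) bounded_measurable_mult[OF bounded_measurable_const assms(2)], of "-1"]
  by simp

lemma bounded_measurable_sum:
  "finite I \<Longrightarrow> (\<And>i. i \<in> I \<Longrightarrow> bounded_measurable t (F i)) \<Longrightarrow> bounded_measurable t (\<lambda>\<omega>. \<Sum>i\<in>I. F i \<omega>)"
  by (induction I rule: finite_induct) (auto intro: bounded_measurable_add bounded_measurable_const)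

lemma bounded_measurable_prod:
  "finite I \<Longrightarrow> (\<And>i. i \<in> I \<Longrightarrow> bounded_measurable t (F i)) \<Longrightarrow> bounded_measurable t (\<lambda>\<omega>. \<Prod>i\<in>I. F i \<omega>)"
  by (induction I rule: finite_induct) (auto intro: bounded_measurable_mult bounded_measurable_const)

lemma bounded_measurable_treatment_indicator:
  assumes "k \<in> {1..t}"
  shows "bounded_measurable t (\<lambda>\<omega>. of_bool (snd (\<omega> k)))"
proof -
  have "(\<lambda>\<omega>. of_bool (snd (\<omega> k)) :: real) \<in> borel_measurable (Tr t)"
    using measurable_comp[OF measurable_component_snd[OF assms], of "\<lambda>b. of_bool b" borel]
    by (simp add: comp_def)
  then show ?thesis unfolding bounded_measurable_def by (auto intro!: exI[of _ 1])
qed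

lemma bounded_measurable_at_treatment:
  assumes "bounded_measurable t (F True)" "bounded_measurable t (F False)" "k \<in> {1..t}"
  shows "bounded_measurable t (\<lambda>\<omega>. F (snd (\<omega> k)) \<omega>)"
proof -
  have "(\<lambda>\<omega>. F (snd (\<omega> k)) \<omega>)
      = (\<lambda>\<omega>. of_bool (snd (\<omega> k)) * F True \<omega> + (1 - of_bool (snd (\<omega> k))) * F False \<omega>)"
    by (auto simp: fun_eq_iff)
  then show ?thesis
    using assms by (simp add: bounded_measurable_add bounded_measurable_mult bounded_measurable_diff
        bounded_measurable_const bounded_measurable_treatment_indicator)
qed

lemma treatment_avg_measurable:
  assumes "g \<in> borel_measurable (Tr (Suc t))" "t < T"
  shows "(\<lambda>(h, x). treatment_avg t h x g) \<in> borel_measurable (Tr t \<Otimes>\<^sub>M N)"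
proof -
  have "(\<lambda>hx. g ((fst hx)(Suc t := (snd hx, b)))) \<in> borel_measurable (Tr t \<Otimes>\<^sub>M N)" for b
    using measurable_comp[OF fun_upd_measurable assms(1)] by (simp add: comp_def case_prod_beta)
  then show ?thesis
    using p_measurable[OF assms(2)] by (simp add: treatment_avg_def case_prod_beta)
qed

lemma abs_treatment_avg_le:
  assumes "\<And>h'. h' \<in> \<Omega> (Suc t) \<Longrightarrow> \<bar>g h'\<bar> \<le> B" "t < T" "h \<in> \<Omega> t" "x \<in> space N"
  shows "\<bar>treatment_avg t h x g\<bar> \<le> B"
  unfolding treatment_avg_def
  using p_bounds[OF assms(2-4)] assms(1)[OF fun_upd_in_\<Omega>[OF assms(3,4)]]
  by (intro abs_convex_combination_le) auto

lemma integrable_treatment_avg: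
  assumes g: "bounded_measurable (Suc t) g" and t: "t < T" and h: "h \<in> \<Omega> t"
  shows "integrable (\<kappa> (Suc t) h) (\<lambda>x. treatment_avg t h x g)"
proof -
  interpret prob_space "\<kappa> (Suc t) h" by (rule kernel_prob_space[OF t h])
  obtain B where B: "\<And>h'. h' \<in> \<Omega> (Suc t) \<Longrightarrow> \<bar>g h'\<bar> \<le> B"
    using bounded_measurableE[OF g] by blast
  have "(\<lambda>x. treatment_avg t h x g) \<in> borel_measurable N"
    using measurable_Pair2[OF treatment_avg_measurable[OF bounded_measurable_measurable[OF g] t] h]
    by simp
  then have "(\<lambda>x. treatment_avg t h x g) \<in> borel_measurable (\<kappa> (Suc t) h)"
    by (simp add: measurable_cong_sets[OF sets_kernel[OF t h] refl])
  then show ?thesis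
    using abs_treatment_avg_le[OF B t h]
    by (intro integrable_const_bound[where B=B] AE_I2) (auto simp: space_kernel[OF t h])
qed

lemma bounded_measurable_condE:
  assumes f: "bounded_measurable T f" and "t \<le> T"
  shows "bounded_measurable t (CE f t)"
  using assms(2)
proof (induction rule: inc_induct)
  case base
  have "CE f T = f" by (simp add: fun_eq_iff condE_terminal)
  then show ?case using f by simp
next
  case (step n)
  have n: "n < T" by (rule step.hyps(2))
  have "(\<lambda>h. \<integral>x. treatment_avg n h x (CE f (Suc n)) \<partial>\<kappa> (Suc n) h) \<in> borel_measurable (Tr n)"
    by (rule integral_measurable_subprob_algebra2[OF treatment_avg_measurable kernel_subprob_measurable])
       (use bounded_measurable_measurable[OF step.IH] n in auto)
  then have meas: "CE f n \<in> borel_measurable (Tr n)"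
    by (simp add: condE_step[OF n, abs_def])
  obtain B where B: "\<And>h'. h' \<in> \<Omega> (Suc n) \<Longrightarrow> \<bar>CE f (Suc n) h'\<bar> \<le> B"
    using bounded_measurableE[OF step.IH] by blast
  have "\<bar>CE f n h\<bar> \<le> B" if h: "h \<in> \<Omega> n" for h
  proof -
    interpret prob_space "\<kappa> (Suc n) h" by (rule kernel_prob_space[OF n h])
    have int: "integrable (\<kappa> (Suc n) h) (\<lambda>x. treatment_avg n h x (CE f (Suc n)))"
      by (rule integrable_treatment_avg[OF step.IH n h])
    have bound: "-B \<le> treatment_avg n h x (CE f (Suc n)) \<and> treatment_avg n h x (CE f (Suc n)) \<le> B"
      if "x \<in> space (\<kappa> (Suc n) h)" for x
    proof -
      have "\<bar>treatment_avg n h x (CE f (Suc n))\<bar> \<le> B"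
        using abs_treatment_avg_le[OF B n h] that by (simp add: space_kernel[OF n h])
      then show ?thesis by linarith
    qed
    have "(\<integral>x. treatment_avg n h x (CE f (Suc n)) \<partial>\<kappa> (Suc n) h) \<le> B"
      using bound by (intro integral_le_const[OF int] AE_I2) blast
    moreover have "-B \<le> (\<integral>x. treatment_avg n h x (CE f (Suc n)) \<partial>\<kappa> (Suc n) h)"
      using bound by (intro integral_ge_const[OF int] AE_I2) blast
    ultimately show ?thesis
      by (simp add: condE_step[OF n] abs_le_iff)
  qed
  then show ?case using meas by (auto simp: bounded_measurable_def)
qed

lemma condE_add:
  assumes f: "bounded_measurable T f" and g: "bounded_measurable T g" and "t \<le> T" "h \<in> \<Omega> t"
  shows "CE (\<lambda>\<omega>. f \<omega> + g \<omega>) t h = CE f t h + CE g t h"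
  using assms(3,4)
proof (induction t arbitrary: h rule: inc_induct)
  case base
  then show ?case by (simp add: condE_terminal)
next
  case (step n)
  have n: "n < T" by (rule step.hyps(2))
  have "CE (\<lambda>\<omega>. f \<omega> + g \<omega>) n h
      = (\<integral>x. treatment_avg n h x (\<lambda>\<omega>. CE f (Suc n) \<omega> + CE g (Suc n) \<omega>) \<partial>\<kappa> (Suc n) h)"
    using step by (intro condE_step_cong) auto
  also have "\<dots> = CE f n h + CE g n h"
    unfolding condE_step[OF n] treatment_avg_add
    using step.hyps n step.prems
    by (intro Bochner_Integration.integral_add integrable_treatment_avg bounded_measurable_condE f g)
       auto
  finally show ?case .
qed

lemma condE_diff:
  assumes "bounded_measurable T f" "bounded_measurable T g" "t \<le> T" "h \<in> \<Omega> t"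
  shows "CE (\<lambda>\<omega>. f \<omega> - g \<omega>) t h = CE f t h - CE g t h"
proof -
  have "CE (\<lambda>\<omega>. f \<omega> + (-1) * g \<omega>) t h = CE f t h + CE (\<lambda>\<omega>. (-1) * g \<omega>) t h"
    using assms by (intro condE_add bounded_measurable_mult bounded_measurable_const)
  also have "CE (\<lambda>\<omega>. (-1) * g \<omega>) t h = (-1) * CE g t h"
    using assms by (intro condE_mult_adapted[of 0]) (simp_all add: adapted_def)
  finally show ?thesis by simp
qed

lemma condE_sum:
  assumes "finite I" "\<And>i. i \<in> I \<Longrightarrow> bounded_measurable T (F i)" "t \<le> T" "h \<in> \<Omega> t"
  shows "CE (\<lambda>\<omega>. \<Sum>i\<in>I. F i \<omega>) t h = (\<Sum>i\<in>I. CE (F i) t h)"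
  using assms(1,2)
proof (induction I rule: finite_induct)
  case empty
  then show ?case using assms(3,4) by (simp add: condE_const)
next
  case (insert i I)
  then show ?case
    using assms(3,4) by (simp add: condE_add bounded_measurable_sum)
qed

lemma bounded_measurable_prefix:
  assumes g: "bounded_measurable s g" and "s \<le> t"
  shows "bounded_measurable t (\<lambda>\<omega>. g (prefix s \<omega>))"
proof -
  obtain B where "\<And>h. h \<in> \<Omega> s \<Longrightarrow> \<bar>g h\<bar> \<le> B" using bounded_measurableE[OF g] by blast
  then have "\<forall>\<omega>\<in>\<Omega> t. \<bar>g (prefix s \<omega>)\<bar> \<le> B" using assms(2) prefix_in_\<Omega> by blast
  moreover have "prefix s \<in> measurable (Tr t) (Tr s)"
    unfolding prefix_def[abs_def] using assms(2) by (intro measurable_restrict_subset) auto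
  ultimately show ?thesis
    using measurable_compose[OF _ bounded_measurable_measurable[OF g]] by (auto simp: bounded_measurable_def)
qed

lemma bounded_measurable_prefix_setA:
  assumes g: "bounded_measurable s g" and s: "s \<in> {1..t}"
  shows "bounded_measurable t (\<lambda>\<omega>. g (prefix s (setA s b \<omega>)))"
proof -
  obtain B where "\<And>h. h \<in> \<Omega> s \<Longrightarrow> \<bar>g h\<bar> \<le> B" using bounded_measurableE[OF g] by blast
  then have "\<forall>\<omega>\<in>\<Omega> t. \<bar>g (prefix s (setA s b \<omega>))\<bar> \<le> B" using s prefix_setA_in_\<Omega> by blast
  moreover have "(\<lambda>\<omega>. prefix s (setA s b \<omega>)) \<in> measurable (Tr t) (Tr s)"
  proof -
    have eq: "(\<lambda>\<omega>. prefix s (setA s b \<omega>)) = (\<lambda>\<omega>. \<lambda>i\<in>{1..s}. if i = s then (fst (\<omega> s), b) else \<omega> i)"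
      by (auto simp: fun_eq_iff prefix_def setA_def)
    show ?thesis
      unfolding eq
    proof (rule measurable_restrict)
      fix i assume i: "i \<in> {1..s}"
      show "(\<lambda>\<omega>. if i = s then (fst (\<omega> s), b) else \<omega> i) \<in> measurable (Tr t) S"
      proof (cases "i = s")
        case True
        have "(\<lambda>\<omega>. (fst (\<omega> s), b)) \<in> measurable (Tr t) S"
          using s by (intro measurable_Pair measurable_component_fst measurable_const) auto
        then show ?thesis using True by simp
      next
        case False
        have "(\<lambda>\<omega>. \<omega> i) \<in> measurable (Tr t) S"
          using i s by (intro measurable_component_singleton) auto
        then show ?thesis using False by simp
      qed
    qed
  qed
  ultimately show ?thesis
    using measurable_compose[OF _ bounded_measurable_measurable[OF g]] by (auto simp: bounded_measurable_def)
qed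

lemma bounded_measurable_treatment_sum:
  assumes "\<And>b. bounded_measurable T (w b)" "bounded_measurable s (m s)" "s \<in> {1..T}"
  shows "bounded_measurable T (treatment_sum m s w)"
  unfolding treatment_sum_def[abs_def] using assms
  by (intro bounded_measurable_sum bounded_measurable_mult bounded_measurable_prefix_setA) auto

lemma condE_centered:
  assumes "bounded_measurable T f" "bounded_measurable s g" "s \<le> T" "h \<in> \<Omega> s"
    and "CE f s h = g h"
  shows "CE (\<lambda>\<omega>. f \<omega> - g (prefix s \<omega>)) s h = 0"
proof -
  have "CE (\<lambda>\<omega>. f \<omega> - g (prefix s \<omega>)) s h = CE f s h - CE (\<lambda>\<omega>. g (prefix s \<omega>)) s h"
    using assms by (intro condE_diff bounded_measurable_prefix)
  also have "CE (\<lambda>\<omega>. g (prefix s \<omega>)) s h = g h"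
    using condE_adapted[OF adapted_prefix_comp order.refl assms(3,4)] prefix_eq_self[OF assms(4)] by simp
  finally show ?thesis using assms(5) by simp
qed

lemma Hist_measurable: "k \<in> {1..t} \<Longrightarrow> Hist k \<in> measurable (Tr t) (PiM {1..<k} (\<lambda>_. S) \<Otimes>\<^sub>M N)"
  unfolding Hist_def[abs_def]
  by (intro measurable_Pair measurable_restrict_subset measurable_component_fst) auto

lemma Hist_in_space:
  "\<omega> \<in> \<Omega> t \<Longrightarrow> k \<in> {1..t} \<Longrightarrow> Hist k \<omega> \<in> space (PiM {1..<k} (\<lambda>_. S) \<Otimes>\<^sub>M N)"
  by (auto simp: Hist_def space_pair_measure mem_space_PiM_S_iff)

definition is_propensity :: "(nat \<Rightarrow> 'x path \<times> 'x \<Rightarrow> real) \<Rightarrow> bool" where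
  "is_propensity pf \<longleftrightarrow> (\<forall>k\<in>{1..T}. pf k \<in> borel_measurable (PiM {1..<k} (\<lambda>_. S) \<Otimes>\<^sub>M N) \<and>
     (\<forall>hx\<in>space (PiM {1..<k} (\<lambda>_. S) \<Otimes>\<^sub>M N). 0 \<le> pf k hx \<and> pf k hx \<le> 1))"

lemma is_propensity_p: "is_propensity p"
  using p_meas p_range by (simp add: is_propensity_def)

lemma propA_bounds:
  "is_propensity pf \<Longrightarrow> k \<in> {1..T} \<Longrightarrow> \<omega> \<in> \<Omega> T \<Longrightarrow> 0 \<le> propA pf k b \<omega> \<and> propA pf k b \<omega> \<le> 1"
  using Hist_in_space[of \<omega> T k] unfolding is_propensity_def propA_def by auto

lemma bounded_measurable_propA:
  assumes pf: "is_propensity pf" and k: "k \<in> {1..T}"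
  shows "bounded_measurable T (propA pf k b)"
proof -
  have "(\<lambda>\<omega>. pf k (Hist k \<omega>)) \<in> borel_measurable (Tr T)"
    using pf k unfolding is_propensity_def by (intro measurable_compose[OF Hist_measurable]) auto
  then have "propA pf k b \<in> borel_measurable (Tr T)"
    unfolding propA_def[abs_def] by (cases b) auto
  moreover have "\<forall>\<omega>\<in>\<Omega> T. \<bar>propA pf k b \<omega>\<bar> \<le> 1" using propA_bounds[OF pf k] by auto
  ultimately show ?thesis unfolding bounded_measurable_def by blast
qed

lemma bounded_measurable_continuous_comp_propA:
  assumes pf: "is_propensity pf" and k: "k \<in> {1..T}" and g: "continuous_on {0..1} g"
  shows "bounded_measurable T (\<lambda>\<omega>. g (propA pf k a \<omega>))"
proof -
  have range: "\<And>\<omega>. \<omega> \<in> \<Omega> T \<Longrightarrow> propA pf k a \<omega> \<in> {0..1}"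
    using propA_bounds[OF pf k] by auto
  obtain B where "\<forall>y\<in>g ` {0..1}. \<bar>y\<bar> \<le> B"
    using compact_imp_bounded[OF compact_continuous_image[OF g compact_Icc]] by (auto simp: bounded_real)
  then have "\<forall>\<omega>\<in>\<Omega> T. \<bar>g (propA pf k a \<omega>)\<bar> \<le> B" using range by blast
  moreover have "(\<lambda>\<omega>. g (propA pf k a \<omega>)) \<in> borel_measurable (Tr T)"
    using g bounded_measurable_measurable[OF bounded_measurable_propA[OF pf k]] range
    by (rule borel_measurable_continuous_on_comp)
  ultimately show ?thesis unfolding bounded_measurable_def by blast
qed

end

locale estimation_setting = sequential_model T N \<kappa> p
  for T :: nat and N :: "'x measure" and \<kappa> :: "nat \<Rightarrow> 'x path \<Rightarrow> 'x measure"
    and p :: "nat \<Rightarrow> 'x path \<times> 'x \<Rightarrow> real" +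
  fixes sf sf' :: "nat \<Rightarrow> real \<Rightarrow> real" and abar :: "nat \<Rightarrow> bool" and C Ch Bm :: real
    and ph :: "nat \<Rightarrow> 'x path \<times> 'x \<Rightarrow> real" and mh :: "nat \<Rightarrow> 'x path \<Rightarrow> real"
  assumes sf_cont: "\<And>k. k \<in> {1..T} \<Longrightarrow> continuous_on {0..1} (sf k)"
    and sf'_cont: "\<And>k. k \<in> {1..T} \<Longrightarrow> continuous_on {0..1} (sf' k)"
    and s_range: "\<And>k x. k \<in> {1..T} \<Longrightarrow> x \<in> {0..1} \<Longrightarrow> 0 \<le> sf k x \<and> sf k x \<le> 1"
    and r_bounded: "\<And>k b \<omega>. k \<in> {1..T} \<Longrightarrow> \<omega> \<in> \<Omega> T \<Longrightarrow> Qf sf abar p k b \<omega> \<le> C * propA p k b \<omega>"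
    and ph_meas: "\<And>k. k \<in> {1..T} \<Longrightarrow> ph k \<in> borel_measurable (PiM {1..<k} (\<lambda>_. S) \<Otimes>\<^sub>M N)"
    and ph_range: "\<And>k hx. k \<in> {1..T} \<Longrightarrow> hx \<in> space (PiM {1..<k} (\<lambda>_. S) \<Otimes>\<^sub>M N)
      \<Longrightarrow> 0 \<le> ph k hx \<and> ph k hx \<le> 1"
    and rh_bounded: "\<And>k b \<omega>. k \<in> {1..T} \<Longrightarrow> \<omega> \<in> \<Omega> T \<Longrightarrow> \<bar>rf sf abar ph k b \<omega>\<bar> \<le> Ch"
    and mh_meas: "\<And>k. k \<in> {1..T} \<Longrightarrow> mh k \<in> borel_measurable (Tr k)"
    and mh_bounded: "\<And>k h. k \<in> {1..T} \<Longrightarrow> h \<in> \<Omega> k \<Longrightarrow> \<bar>mh k h\<bar> \<le> Bm"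
    and mh_T: "\<And>h. h \<in> \<Omega> T \<Longrightarrow> mh T h = of_bool (snd (h T))"
begin

abbreviation mt :: "nat \<Rightarrow> 'x path \<Rightarrow> real" where
  "mt \<equiv> mtrue T \<kappa> p sf abar"

lemma is_propensity_ph: "is_propensity ph"
  using ph_meas ph_range by (simp add: is_propensity_def)

lemma bounded_measurable_mh: "k \<in> {1..T} \<Longrightarrow> bounded_measurable k (mh k)"
  unfolding bounded_measurable_def using mh_meas mh_bounded by blast

lemma Qf_eq: "Qf sf abar pf k b = (\<lambda>\<omega>. if b = abar k
    then propA pf k (abar k) \<omega> + sf k (propA pf k (abar k) \<omega>) * (1 - propA pf k (abar k) \<omega>)
    else 1 - (propA pf k (abar k) \<omega> + sf k (propA pf k (abar k) \<omega>) * (1 - propA pf k (abar k) \<omega>)))"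
  by (auto simp: fun_eq_iff Qf_def Let_def)

lemma phif_eq: "phif sf sf' abar pf k b = (\<lambda>\<omega>. (2 * of_bool (b = abar k) - 1)
    * (of_bool (snd (\<omega> k) = abar k) - propA pf k (abar k) \<omega>)
    * (1 - sf k (propA pf k (abar k) \<omega>) + sf' k (propA pf k (abar k) \<omega>) * (1 - propA pf k (abar k) \<omega>)))"
  by (auto simp: fun_eq_iff phif_def Let_def)

lemma bounded_measurable_Qf:
  assumes pf: "is_propensity pf" and k: "k \<in> {1..T}"
  shows "bounded_measurable T (Qf sf abar pf k b)"
proof -
  have "bounded_measurable T (\<lambda>\<omega>. propA pf k (abar k) \<omega>
      + sf k (propA pf k (abar k) \<omega>) * (1 - propA pf k (abar k) \<omega>))" (is "bounded_measurable T ?q")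
    by (intro bounded_measurable_add bounded_measurable_mult bounded_measurable_diff bounded_measurable_const
        bounded_measurable_propA[OF pf k] bounded_measurable_continuous_comp_propA[OF pf k sf_cont[OF k]])
  then have "bounded_measurable T (\<lambda>\<omega>. 1 - ?q \<omega>)"
    by (intro bounded_measurable_diff bounded_measurable_const)
  with \<open>bounded_measurable T ?q\<close> show ?thesis
    unfolding Qf_eq by (cases "b = abar k") simp_all
qed

lemma bounded_measurable_phif:
  assumes pf: "is_propensity pf" and k: "k \<in> {1..T}"
  shows "bounded_measurable T (phif sf sf' abar pf k b)"
proof -
  have "bounded_measurable T (\<lambda>\<omega>. of_bool (snd (\<omega> k) = abar k))"
    using bounded_measurable_at_treatment[where F="\<lambda>a _. of_bool (a = abar k)"] k
    by (simp add: bounded_measurable_const)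
  then show ?thesis
    unfolding phif_eq
    by (intro bounded_measurable_mult bounded_measurable_add bounded_measurable_diff
        bounded_measurable_const bounded_measurable_propA[OF pf k]
        bounded_measurable_continuous_comp_propA[OF pf k sf_cont[OF k]]
        bounded_measurable_continuous_comp_propA[OF pf k sf'_cont[OF k]])
qed

lemma Qf_nonneg:
  assumes pf: "is_propensity pf" and k: "k \<in> {1..T}" and \<omega>: "\<omega> \<in> \<Omega> T"
  shows "0 \<le> Qf sf abar pf k b \<omega>"
proof -
  define P where "P = propA pf k (abar k) \<omega>"
  have P: "0 \<le> P" "P \<le> 1" using propA_bounds[OF pf k \<omega>] by (auto simp: P_def)
  have s: "0 \<le> sf k P" "sf k P \<le> 1" using s_range[OF k] P by auto
  have "sf k P * (1 - P) \<le> 1 * (1 - P)" using P s by (intro mult_right_mono) auto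
  then show ?thesis unfolding Qf_eq P_def[symmetric] using P s by auto
qed

lemma bounded_measurable_rf:
  assumes pf: "is_propensity pf" and k: "k \<in> {1..T}"
    and bound: "\<And>\<omega>. \<omega> \<in> \<Omega> T \<Longrightarrow> \<bar>rf sf abar pf k b \<omega>\<bar> \<le> B"
  shows "bounded_measurable T (rf sf abar pf k b)"
proof -
  have "rf sf abar pf k b \<in> borel_measurable (Tr T)"
    unfolding rf_def[abs_def]
    using bounded_measurable_measurable[OF bounded_measurable_Qf[OF pf k]]
      bounded_measurable_measurable[OF bounded_measurable_propA[OF pf k]]
    by (rule borel_measurable_divide)
  then show ?thesis using bound unfolding bounded_measurable_def by blast
qed

lemma rf_p_abs_le:
  assumes k: "k \<in> {1..T}" and \<omega>: "\<omega> \<in> \<Omega> T"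
  shows "\<bar>rf sf abar p k b \<omega>\<bar> \<le> \<bar>C\<bar>"
proof (cases "propA p k b \<omega> = 0")
  case True
  then show ?thesis by (simp add: rf_def)
next
  case False
  then have P: "0 < propA p k b \<omega>" using propA_bounds[OF is_propensity_p k \<omega>, of b] by linarith
  have "0 \<le> Qf sf abar p k b \<omega>" "Qf sf abar p k b \<omega> \<le> C * propA p k b \<omega>"
    using Qf_nonneg[OF is_propensity_p k \<omega>, of b] r_bounded[OF k \<omega>, of b] by auto
  moreover have "C * propA p k b \<omega> \<le> \<bar>C\<bar> * propA p k b \<omega>"
    using P by (intro mult_right_mono) auto
  ultimately have "Qf sf abar p k b \<omega> \<le> \<bar>C\<bar> * propA p k b \<omega>"
    by linarith
  then show ?thesis
    using \<open>0 \<le> Qf sf abar p k b \<omega>\<close> P by (simp add: rf_def divide_le_eq)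
qed

lemma Qf_prefix: "k \<in> {1..s} \<Longrightarrow> Qf sf abar pf k b (prefix s \<omega>) = Qf sf abar pf k b \<omega>"
  by (simp add: Qf_def propA_prefix)

lemma rf_prefix: "k \<in> {1..s} \<Longrightarrow> rf sf abar pf k b (prefix s \<omega>) = rf sf abar pf k b \<omega>"
  by (simp add: rf_def Qf_prefix propA_prefix)

lemma phif_prefix: "k \<in> {1..s} \<Longrightarrow> phif sf sf' abar pf k b (prefix s \<omega>) = phif sf sf' abar pf k b \<omega>"
  by (simp add: phif_def propA_prefix prefix_apply)

text \<open>Where \<open>P(A_k = b | H_k) = 0\<close>, \<open>rf\<close> is \<open>0\<close> by division by zero; the identity survives
  because \<open>r_bounded\<close> forces \<open>Q_k(b | H_k) = 0\<close> there as well.\<close>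
lemma propA_mult_rf:
  assumes k: "k \<in> {1..T}" and \<omega>: "\<omega> \<in> \<Omega> k"
  shows "propA p k b \<omega> * rf sf abar p k b \<omega> = Qf sf abar p k b \<omega>"
proof -
  have "fst (\<omega> k) \<in> space N" using \<omega> k unfolding mem_space_PiM_S_iff by auto
  moreover have "k \<le> T" using k by simp
  ultimately obtain \<omega>' where \<omega>': "\<omega>' \<in> \<Omega> T" "prefix k \<omega>' = \<omega>"
    using extend_to_\<Omega>[OF \<omega>] by blast
  have kk: "k \<in> {1..k}" using k by simp
  have "propA p k b \<omega>' * rf sf abar p k b \<omega>' = Qf sf abar p k b \<omega>'"
  proof (cases "propA p k b \<omega>' = 0")
    case True
    then show ?thesis
      using Qf_nonneg[OF is_propensity_p k \<omega>'(1), of b] r_bounded[OF k \<omega>'(1), of b] by simp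
  next
    case False
    then show ?thesis by (simp add: rf_def)
  qed
  then show ?thesis
    unfolding \<omega>'(2)[symmetric] propA_prefix[OF kk] rf_prefix[OF kk] Qf_prefix[OF kk] .
qed

lemma bounded_measurable_rf_p_at_treatment:
  "k \<in> {1..T} \<Longrightarrow> bounded_measurable T (\<lambda>\<omega>. rf sf abar p k (snd (\<omega> k)) \<omega>)"
  by (rule bounded_measurable_at_treatment;
      (rule bounded_measurable_rf[OF is_propensity_p _ rf_p_abs_le])?) auto

lemma bounded_measurable_rf_ph_at_treatment:
  "k \<in> {1..T} \<Longrightarrow> bounded_measurable T (\<lambda>\<omega>. rf sf abar ph k (snd (\<omega> k)) \<omega>)"
  by (rule bounded_measurable_at_treatment;
      (rule bounded_measurable_rf[OF is_propensity_ph _ rh_bounded])?) auto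

lemma adapted_Qf: "k \<in> {1..s} \<Longrightarrow> adapted s (Qf sf abar pf k b)"
  by (intro adaptedI) (rule Qf_prefix)

lemma propA_fun_upd_indep:
  "h \<in> \<Omega> t \<Longrightarrow> propA pf (Suc t) b (h(Suc t := (x, a))) = propA pf (Suc t) b (h(Suc t := (x, a')))"
  by (simp add: propA_fun_upd)

lemma treatment_avg_Qf:
  assumes h: "h \<in> \<Omega> t"
  shows "treatment_avg t h x (Qf sf abar pf (Suc t) b) = Qf sf abar pf (Suc t) b (h(Suc t := (x, b)))"
proof -
  have "Qf sf abar pf (Suc t) b (h(Suc t := (x, a))) = Qf sf abar pf (Suc t) b (h(Suc t := (x, b)))" for a
    unfolding Qf_def using propA_fun_upd_indep[OF h, of pf _ x a b] by simp
  from this[of True] this[of False] show ?thesis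
    by (simp add: treatment_avg_def algebra_simps)
qed

lemma treatment_avg_phif:
  assumes h: "h \<in> \<Omega> t"
  shows "treatment_avg t h x (phif sf sf' abar p (Suc t) b) = 0"
proof -
  define q where "q = p (Suc t) (h, x)"
  define P where "P = propA p (Suc t) (abar (Suc t)) (h(Suc t := (x, True)))"
  define K where "K = 1 - sf (Suc t) P + sf' (Suc t) P * (1 - P)"
  define c where "c = 2 * of_bool (b = abar (Suc t)) - (1 :: real)"
  have "propA p (Suc t) (abar (Suc t)) (h(Suc t := (x, a))) = P" for a
    unfolding P_def by (rule propA_fun_upd_indep[OF h])
  then have phif: "phif sf sf' abar p (Suc t) b (h(Suc t := (x, a))) = c * (of_bool (a = abar (Suc t)) - P) * K"
    for a
    by (simp add: phif_def Let_def K_def c_def)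
  have centered: "q * (of_bool (True = abar (Suc t)) - P) + (1 - q) * (of_bool (False = abar (Suc t)) - P) = 0"
    by (cases "abar (Suc t)") (simp_all add: q_def P_def propA_fun_upd[OF h] algebra_simps)
  have "treatment_avg t h x (phif sf sf' abar p (Suc t) b)
      = c * K * (q * (of_bool (True = abar (Suc t)) - P) + (1 - q) * (of_bool (False = abar (Suc t)) - P))"
    unfolding treatment_avg_def phif q_def by (simp only: algebra_simps)
  then show ?thesis by (simp only: centered mult_zero_right)
qed

lemma treatment_avg_rf:
  assumes t: "t < T" and h: "h \<in> \<Omega> t" and x: "x \<in> space N"
  shows "treatment_avg t h x (\<lambda>\<omega>. rf sf abar p (Suc t) (snd (\<omega> (Suc t))) \<omega> * g \<omega>)
       = (\<Sum>b\<in>UNIV. treatment_avg t h x (Qf sf abar p (Suc t) b) * g (h(Suc t := (x, b))))"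
proof -
  have k: "Suc t \<in> {1..T}" using t by simp
  have weight: "propA p (Suc t) a (h(Suc t := (x, a))) * rf sf abar p (Suc t) a (h(Suc t := (x, a)))
      = Qf sf abar p (Suc t) a (h(Suc t := (x, a)))" for a
    by (rule propA_mult_rf[OF k fun_upd_in_\<Omega>[OF h x]])
  have "treatment_avg t h x (\<lambda>\<omega>. rf sf abar p (Suc t) (snd (\<omega> (Suc t))) \<omega> * g \<omega>)
      = (p (Suc t) (h, x) * rf sf abar p (Suc t) True (h(Suc t := (x, True)))) * g (h(Suc t := (x, True)))
        + ((1 - p (Suc t) (h, x)) * rf sf abar p (Suc t) False (h(Suc t := (x, False))))
          * g (h(Suc t := (x, False)))"
    by (simp add: treatment_avg_def ac_simps)
  also have "\<dots> = Qf sf abar p (Suc t) True (h(Suc t := (x, True))) * g (h(Suc t := (x, True)))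
        + Qf sf abar p (Suc t) False (h(Suc t := (x, False))) * g (h(Suc t := (x, False)))"
    using weight[of True] weight[of False] by (simp add: propA_fun_upd[OF h])
  also have "\<dots> = (\<Sum>b\<in>UNIV. treatment_avg t h x (Qf sf abar p (Suc t) b) * g (h(Suc t := (x, b))))"
    by (simp add: UNIV_bool treatment_avg_Qf[OF h])
  finally show ?thesis .
qed

lemma mt_terminal: "T \<le> s \<Longrightarrow> mt s h = of_bool (snd (h T))"
  by (subst mtrue.simps) simp

lemma mt_step: "s < T \<Longrightarrow> mt s h = CE (treatment_sum mt (Suc s) (Qf sf abar p (Suc s))) s h"
  by (subst mtrue.simps) (simp add: treatment_sum_def[abs_def])

lemma bounded_measurable_mt:
  assumes "1 \<le> T" "s \<le> T"
  shows "bounded_measurable s (mt s)"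
  using assms(2)
proof (induction rule: inc_induct)
  case base
  have "mt T = (\<lambda>\<omega>. of_bool (snd (\<omega> T)))" by (simp add: fun_eq_iff mt_terminal)
  then show ?case using assms(1) by (simp add: bounded_measurable_treatment_indicator)
next
  case (step n)
  have "bounded_measurable T (treatment_sum mt (Suc n) (Qf sf abar p (Suc n)))"
    using step by (intro bounded_measurable_treatment_sum bounded_measurable_Qf[OF is_propensity_p]) auto
  then have "bounded_measurable n (CE (treatment_sum mt (Suc n) (Qf sf abar p (Suc n))) n)"
    using step.hyps by (intro bounded_measurable_condE) auto
  moreover have "mt n = CE (treatment_sum mt (Suc n) (Qf sf abar p (Suc n))) n"
    by (simp add: fun_eq_iff mt_step[OF step.hyps(2)])
  ultimately show ?case by simp
qed

definition Qphi :: "(nat \<Rightarrow> 'x path \<times> 'x \<Rightarrow> real) \<Rightarrow> nat \<Rightarrow> bool \<Rightarrow> 'x path \<Rightarrow> real" where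
  "Qphi pf s b \<omega> = Qf sf abar pf s b \<omega> + phif sf sf' abar pf s b \<omega>"

lemma bounded_measurable_Qphi: "is_propensity pf \<Longrightarrow> k \<in> {1..T} \<Longrightarrow> bounded_measurable T (Qphi pf k b)"
  unfolding Qphi_def[abs_def] by (intro bounded_measurable_add bounded_measurable_Qf bounded_measurable_phif)

lemma adapted_Qphi: "k \<in> {1..s} \<Longrightarrow> adapted s (Qphi pf k b)"
  by (intro adaptedI) (simp add: Qphi_def Qf_prefix phif_prefix)

lemma condE_Qphi_sum:
  assumes s: "s < T" and h: "h \<in> \<Omega> s"
  shows "CE (treatment_sum mt (Suc s) (Qphi p (Suc s))) s h = mt s h"
proof -
  have "CE (treatment_sum mt (Suc s) (Qphi p (Suc s))) s h
      = CE (treatment_sum mt (Suc s) (Qf sf abar p (Suc s))) s h"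
  proof (rule condE_eq_by_treatment_avg[OF s _ _ h])
    show "adapted (Suc s) (treatment_sum mt (Suc s) (Qphi p (Suc s)))"
      by (intro adapted_treatment_sum adapted_Qphi) auto
    show "adapted (Suc s) (treatment_sum mt (Suc s) (Qf sf abar p (Suc s)))"
      by (intro adapted_treatment_sum adapted_Qf) auto
    fix x
    show "treatment_avg s h x (treatment_sum mt (Suc s) (Qphi p (Suc s)))
        = treatment_avg s h x (treatment_sum mt (Suc s) (Qf sf abar p (Suc s)))"
      by (simp add: treatment_avg_treatment_sum[OF h] Qphi_def[abs_def] treatment_avg_add
          treatment_avg_phif[OF h])
  qed
  then show ?thesis by (simp add: mt_step[OF s])
qed

text \<open>The summand of the error of the estimated pseudo-outcome that has conditional mean zero.\<close>
definition increment :: "nat \<Rightarrow> 'x path \<Rightarrow> real" where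
  "increment s \<omega> = rf sf abar p s (snd (\<omega> s)) \<omega> * (mt s (prefix s \<omega>) - mh s (prefix s \<omega>))
     + treatment_sum mh s (Qf sf abar p s) \<omega> - mt (s - 1) (prefix (s - 1) \<omega>)"

lemma bounded_measurable_increment:
  assumes "s \<in> {1..T}"
  shows "bounded_measurable T (increment s)"
proof -
  have "1 \<le> T" using assms by simp
  then show ?thesis
    unfolding increment_def[abs_def] using assms
    by (intro bounded_measurable_add bounded_measurable_diff bounded_measurable_mult
        bounded_measurable_rf_p_at_treatment bounded_measurable_prefix bounded_measurable_mt
        bounded_measurable_mh bounded_measurable_treatment_sum bounded_measurable_Qf[OF is_propensity_p])
      auto
qed

lemma condE_increment:
  assumes s: "s < T" and h: "h \<in> \<Omega> s"
  shows "CE (increment (Suc s)) s h = 0"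
proof -
  let ?W = "treatment_sum mt (Suc s) (Qf sf abar p (Suc s))"
  let ?X = "treatment_sum mh (Suc s) (Qf sf abar p (Suc s))"
  let ?Q = "\<lambda>x b. treatment_avg s h x (Qf sf abar p (Suc s) b)"
  have "CE (increment (Suc s)) s h = CE (\<lambda>\<omega>. ?W \<omega> - mt s (prefix s \<omega>)) s h"
  proof (rule condE_eq_by_treatment_avg[OF s _ _ h])
    have "adapted (Suc s) ?X" "adapted (Suc s) ?W"
      by (intro adapted_treatment_sum adapted_Qf; simp)+
    then show "adapted (Suc s) (increment (Suc s))" "adapted (Suc s) (\<lambda>\<omega>. ?W \<omega> - mt s (prefix s \<omega>))"
      by (auto intro!: adaptedI simp: increment_def adaptedD rf_prefix prefix_apply prefix_prefix)
    fix x assume x: "x \<in> space N"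
    have "treatment_avg s h x (increment (Suc s))
        = treatment_avg s h x (\<lambda>\<omega>. rf sf abar p (Suc s) (snd (\<omega> (Suc s))) \<omega>
            * (mt (Suc s) (prefix (Suc s) \<omega>) - mh (Suc s) (prefix (Suc s) \<omega>)))
          + treatment_avg s h x ?X - mt s h"
      by (simp add: increment_def[abs_def] treatment_avg_add treatment_avg_diff treatment_avg_prefix_comp
          prefix_eq_self[OF h])
    also have "\<dots> = (\<Sum>b\<in>UNIV. ?Q x b * (mt (Suc s) (h(Suc s := (x, b))) - mh (Suc s) (h(Suc s := (x, b)))))
          + (\<Sum>b\<in>UNIV. mh (Suc s) (h(Suc s := (x, b))) * ?Q x b) - mt s h"
      by (simp add: treatment_avg_rf[OF s h x] treatment_avg_treatment_sum[OF h] prefix_Suc_fun_upd[OF h])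
    also have "\<dots> = (\<Sum>b\<in>UNIV. mt (Suc s) (h(Suc s := (x, b))) * ?Q x b) - mt s h"
      by (simp add: UNIV_bool algebra_simps)
    also have "\<dots> = treatment_avg s h x (\<lambda>\<omega>. ?W \<omega> - mt s (prefix s \<omega>))"
      by (simp add: treatment_avg_diff treatment_avg_prefix_comp treatment_avg_treatment_sum[OF h]
          prefix_eq_self[OF h])
    finally show "treatment_avg s h x (increment (Suc s)) = treatment_avg s h x (\<lambda>\<omega>. ?W \<omega> - mt s (prefix s \<omega>))" .
  qed
  also have "\<dots> = 0"
  proof (rule condE_centered)
    show "bounded_measurable T ?W"
      using s by (intro bounded_measurable_treatment_sum bounded_measurable_Qf[OF is_propensity_p]
          bounded_measurable_mt) auto
    show "bounded_measurable s (mt s)" using s by (intro bounded_measurable_mt) auto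
    show "CE ?W s h = mt s h" by (simp add: mt_step[OF s])
  qed (use s h in auto)
  finally show ?thesis .
qed

definition ratio_prod :: "(nat \<Rightarrow> 'x path \<times> 'x \<Rightarrow> real) \<Rightarrow> nat \<Rightarrow> nat \<Rightarrow> 'x path \<Rightarrow> real" where
  "ratio_prod pf t s \<omega> = (\<Prod>k\<in>{Suc t..<s}. rf sf abar pf k (snd (\<omega> k)) \<omega>)"

lemma ratio_prod_start: "ratio_prod pf t (Suc t) \<omega> = 1"
  by (simp add: ratio_prod_def)

lemma ratio_prod_Suc:
  "Suc t \<le> s \<Longrightarrow> ratio_prod pf t (Suc s) \<omega> = ratio_prod pf t s \<omega> * rf sf abar pf s (snd (\<omega> s)) \<omega>"
  by (simp add: ratio_prod_def prod.atLeastLessThan_Suc)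

lemma adapted_ratio_prod: "s \<le> Suc j \<Longrightarrow> adapted j (ratio_prod pf t s)"
  unfolding ratio_prod_def by (intro adaptedI prod.cong refl) (auto simp: rf_prefix prefix_apply)

lemma bounded_measurable_ratio_prod:
  assumes "\<And>k. k \<in> {1..T} \<Longrightarrow> bounded_measurable T (\<lambda>\<omega>. rf sf abar pf k (snd (\<omega> k)) \<omega>)" "s \<le> Suc T"
  shows "bounded_measurable T (ratio_prod pf t s)"
  unfolding ratio_prod_def[abs_def] using assms by (intro bounded_measurable_prod) auto

lemma Pstar_eq:
  assumes t: "t < T" and m_T: "\<And>b. m T (prefix T (setA T b \<omega>)) = of_bool b"
  shows "Pstar T sf sf' abar pf m (Suc t) \<omega> = treatment_sum m (Suc t) (Qphi pf (Suc t)) \<omega>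
     + (\<Sum>s\<in>{Suc t..<T}. ratio_prod pf t (Suc s) \<omega>
          * (treatment_sum m (Suc s) (Qphi pf (Suc s)) \<omega> - m s (prefix s \<omega>)))"
proof (cases "Suc t = T")
  case True
  then show ?thesis by (simp add: Pstar_def treatment_sum_def Qphi_def m_T UNIV_bool)
next
  case False
  then have "{Suc t..T - 1} = {Suc t..<T}" using t by auto
  with False show ?thesis
    by (simp add: Pstar_def treatment_sum_def Qphi_def ratio_prod_def atLeastLessThanSuc_atLeastAtMost)
qed

lemma condE_Pstar:
  assumes t: "t < T" and h: "h \<in> \<Omega> t"
  shows "CE (Pstar T sf sf' abar p mt (Suc t)) t h = mt t h"
proof -
  define V where "V s = treatment_sum mt s (Qphi p s)" for s
  define G where "G s \<omega> = ratio_prod p t (Suc s) \<omega> * (V (Suc s) \<omega> - mt s (prefix s \<omega>))" for s \<omega>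
  have T1: "1 \<le> T" using t by simp
  have m_T: "mt T (prefix T (setA T b \<omega>)) = of_bool b" for b \<omega>
    using T1 by (simp add: mt_terminal prefix_def setA_def)
  have V: "bounded_measurable T (V s)" if "s \<in> {1..T}" for s
    unfolding V_def using that T1
    by (intro bounded_measurable_treatment_sum bounded_measurable_Qphi[OF is_propensity_p] bounded_measurable_mt)
      auto
  have G: "bounded_measurable T (G s)" if "s \<in> {Suc t..<T}" for s
    unfolding G_def[abs_def] using that T1
    by (intro bounded_measurable_mult bounded_measurable_diff bounded_measurable_ratio_prod V
        bounded_measurable_prefix bounded_measurable_mt bounded_measurable_rf_p_at_treatment) auto
  have G_zero: "CE (G s) t h = 0" if "s \<in> {Suc t..<T}" for s
    unfolding G_def[abs_def]
  proof (rule condE_mult_adapted_eq_0[of s])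
    show "adapted s (ratio_prod p t (Suc s))" by (rule adapted_ratio_prod) simp
    fix h' assume h': "h' \<in> \<Omega> s"
    show "CE (\<lambda>\<omega>. V (Suc s) \<omega> - mt s (prefix s \<omega>)) s h' = 0"
      using that h' T1
      by (intro condE_centered V bounded_measurable_mt) (auto simp: V_def condE_Qphi_sum)
  qed (use that h in auto)
  have "CE (Pstar T sf sf' abar p mt (Suc t)) t h = CE (\<lambda>\<omega>. V (Suc t) \<omega> + (\<Sum>s\<in>{Suc t..<T}. G s \<omega>)) t h"
    using t h by (intro condE_cong) (simp_all add: Pstar_eq[where m=mt, OF t m_T] V_def G_def)
  also have "\<dots> = CE (V (Suc t)) t h + CE (\<lambda>\<omega>. \<Sum>s\<in>{Suc t..<T}. G s \<omega>) t h"
    using t h by (intro condE_add V bounded_measurable_sum G) auto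
  also have "CE (\<lambda>\<omega>. \<Sum>s\<in>{Suc t..<T}. G s \<omega>) t h = (\<Sum>s\<in>{Suc t..<T}. CE (G s) t h)"
    using t h G by (intro condE_sum) auto
  also have "(\<Sum>s\<in>{Suc t..<T}. CE (G s) t h) = 0"
    using G_zero by simp
  also have "CE (V (Suc t)) t h = mt t h"
    using t h by (simp add: V_def condE_Qphi_sum)
  finally show ?thesis by simp
qed

lemma Pstar_hat_minus_mt:
  assumes t: "t < T" and \<omega>: "\<omega> \<in> \<Omega> T"
  shows "Pstar T sf sf' abar ph mh (Suc t) \<omega> - mt t (prefix t \<omega>)
    = (\<Sum>s\<in>{Suc t..T}. ratio_prod ph t s \<omega> * ((mt s (prefix s \<omega>) - mh s (prefix s \<omega>))
        * rf sf abar ph s (snd (\<omega> s)) \<omega> + treatment_sum mh s (Qphi ph s) \<omega> - mt (s - 1) (prefix (s - 1) \<omega>)))"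
proof -
  have m_T: "mh T (prefix T (setA T b \<omega>)) = of_bool b" for b
    using mh_T[OF prefix_setA_in_\<Omega>[OF \<omega>]] t by (simp add: prefix_def setA_def)
  have boundary: "mh T (prefix T \<omega>) = mt T (prefix T \<omega>)"
    using mh_T[OF prefix_in_\<Omega>[OF \<omega> order.refl]] by (simp add: mt_terminal)
  have "treatment_sum mh (Suc t) (Qphi ph (Suc t)) \<omega>
        + (\<Sum>s\<in>{Suc t..<T}. ratio_prod ph t (Suc s) \<omega>
            * (treatment_sum mh (Suc s) (Qphi ph (Suc s)) \<omega> - mh s (prefix s \<omega>)))
        - mt (Suc t - 1) (prefix (Suc t - 1) \<omega>)
        + ratio_prod ph t (Suc T) \<omega> * (mt T (prefix T \<omega>) - mh T (prefix T \<omega>))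
      = (\<Sum>s\<in>{Suc t..T}. ratio_prod ph t s \<omega> * ((mt s (prefix s \<omega>) - mh s (prefix s \<omega>))
          * rf sf abar ph s (snd (\<omega> s)) \<omega> + treatment_sum mh s (Qphi ph s) \<omega> - mt (s - 1) (prefix (s - 1) \<omega>)))"
    using t by (intro weighted_telescoping) (simp_all add: ratio_prod_start ratio_prod_Suc)
  then show ?thesis
    using boundary by (simp add: Pstar_eq[where m=mh, OF t m_T])
qed

lemma condE_Pstar_hat:
  assumes t: "t < T" and h: "h \<in> \<Omega> t"
  shows "CE (\<lambda>\<omega>. Pstar T sf sf' abar ph mh (Suc t) \<omega> - mt t (prefix t \<omega>)) t h
       = (\<Sum>s\<in>{Suc t..T}. CE (\<lambda>\<omega>. ratio_prod ph t s \<omega> * (mt s (prefix s \<omega>) - mh s (prefix s \<omega>))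
            * (rf sf abar ph s (snd (\<omega> s)) \<omega> - rf sf abar p s (snd (\<omega> s)) \<omega>)) t h)
       + (\<Sum>s\<in>{Suc t..T}. CE (\<lambda>\<omega>. ratio_prod ph t s \<omega> * (\<Sum>b\<in>UNIV. mh s (prefix s (setA s b \<omega>))
            * (Qf sf abar ph s b \<omega> + phif sf sf' abar ph s b \<omega> - Qf sf abar p s b \<omega>))) t h)"
proof -
  define A where "A s \<omega> = ratio_prod ph t s \<omega> * (mt s (prefix s \<omega>) - mh s (prefix s \<omega>))
    * (rf sf abar ph s (snd (\<omega> s)) \<omega> - rf sf abar p s (snd (\<omega> s)) \<omega>)" for s \<omega>
  define B where "B s \<omega> = ratio_prod ph t s \<omega> * (\<Sum>b\<in>UNIV. mh s (prefix s (setA s b \<omega>))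
    * (Qf sf abar ph s b \<omega> + phif sf sf' abar ph s b \<omega> - Qf sf abar p s b \<omega>))" for s \<omega>
  define E where "E s \<omega> = ratio_prod ph t s \<omega> * increment s \<omega>" for s \<omega>
  have T1: "1 \<le> T" using t by simp
  have R: "bounded_measurable T (ratio_prod ph t s)" if "s \<in> {Suc t..T}" for s
    using that by (intro bounded_measurable_ratio_prod bounded_measurable_rf_ph_at_treatment) auto
  have A: "bounded_measurable T (A s)" if "s \<in> {Suc t..T}" for s
    unfolding A_def[abs_def] using that T1 R
    by (intro bounded_measurable_mult bounded_measurable_diff bounded_measurable_prefix bounded_measurable_mt
        bounded_measurable_mh bounded_measurable_rf_p_at_treatment bounded_measurable_rf_ph_at_treatment) auto
  have B: "bounded_measurable T (B s)" if "s \<in> {Suc t..T}" for s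
    unfolding B_def[abs_def] using that R
    by (intro bounded_measurable_mult bounded_measurable_sum bounded_measurable_diff bounded_measurable_add
        bounded_measurable_prefix_setA bounded_measurable_mh bounded_measurable_Qf bounded_measurable_phif
        is_propensity_p is_propensity_ph) auto
  have E: "bounded_measurable T (E s)" if "s \<in> {Suc t..T}" for s
    unfolding E_def[abs_def] using that R by (intro bounded_measurable_mult bounded_measurable_increment) auto
  have E_zero: "CE (E s) t h = 0" if s: "s \<in> {Suc t..T}" for s
  proof -
    obtain j where j: "s = Suc j" "t \<le> j" "j < T" using s by (cases s) auto
    show ?thesis
      unfolding E_def[abs_def] j(1)
    proof (rule condE_mult_adapted_eq_0[of j])
      show "adapted j (ratio_prod ph t (Suc j))" by (rule adapted_ratio_prod) simp
      show "CE (increment (Suc j)) j h' = 0" if "h' \<in> \<Omega> j" for h'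
        using j(3) that by (rule condE_increment)
    qed (use j h in auto)
  qed
  have split: "ratio_prod ph t s \<omega> * ((mt s (prefix s \<omega>) - mh s (prefix s \<omega>)) * rf sf abar ph s (snd (\<omega> s)) \<omega>
      + treatment_sum mh s (Qphi ph s) \<omega> - mt (s - 1) (prefix (s - 1) \<omega>)) = A s \<omega> + B s \<omega> + E s \<omega>" for s \<omega>
    by (simp add: A_def B_def E_def increment_def treatment_sum_def Qphi_def UNIV_bool algebra_simps)
  have "CE (\<lambda>\<omega>. Pstar T sf sf' abar ph mh (Suc t) \<omega> - mt t (prefix t \<omega>)) t h
      = CE (\<lambda>\<omega>. \<Sum>s\<in>{Suc t..T}. A s \<omega> + B s \<omega> + E s \<omega>) t h"
  proof (rule condE_cong[OF _ _ h])
    fix \<omega> assume \<omega>: "\<omega> \<in> \<Omega> T"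
    show "Pstar T sf sf' abar ph mh (Suc t) \<omega> - mt t (prefix t \<omega>) = (\<Sum>s\<in>{Suc t..T}. A s \<omega> + B s \<omega> + E s \<omega>)"
      unfolding Pstar_hat_minus_mt[OF t \<omega>] split ..
  qed (use t in simp)
  also have "\<dots> = (\<Sum>s\<in>{Suc t..T}. CE (\<lambda>\<omega>. A s \<omega> + B s \<omega> + E s \<omega>) t h)"
    by (rule condE_sum) (use t h in \<open>auto intro!: bounded_measurable_add A B E\<close>)
  also have "\<dots> = (\<Sum>s\<in>{Suc t..T}. CE (A s) t h + CE (B s) t h)"
  proof (rule sum.cong[OF refl])
    fix s assume s: "s \<in> {Suc t..T}"
    have "CE (\<lambda>\<omega>. A s \<omega> + B s \<omega> + E s \<omega>) t h = CE (\<lambda>\<omega>. A s \<omega> + B s \<omega>) t h + CE (E s) t h"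
      using t h s by (intro condE_add bounded_measurable_add A B E) auto
    also have "CE (\<lambda>\<omega>. A s \<omega> + B s \<omega>) t h = CE (A s) t h + CE (B s) t h"
      using t h s by (intro condE_add A B) auto
    finally show "CE (\<lambda>\<omega>. A s \<omega> + B s \<omega> + E s \<omega>) t h = CE (A s) t h + CE (B s) t h"
      using E_zero[OF s] by simp
  qed
  finally show ?thesis
    unfolding sum.distrib A_def[abs_def] B_def[abs_def] .
qed

end


theorem lemma2:
  fixes T :: nat
    and N :: "'x measure"
    and \<kappa> :: "nat \<Rightarrow> 'x path \<Rightarrow> 'x measure"
    and p ph :: "nat \<Rightarrow> 'x path \<times> 'x \<Rightarrow> real"
    and abar :: "nat \<Rightarrow> bool"
    and sf sf' :: "nat \<Rightarrow> real \<Rightarrow> real"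
    and mh :: "nat \<Rightarrow> 'x path \<Rightarrow> real"
    and Ds C Ch Bm :: real
  defines "S \<equiv> N \<Otimes>\<^sub>M count_space (UNIV :: bool set)"
  assumes kernel: "\<And>t. t \<in> {1..T} \<Longrightarrow> \<kappa> t \<in> measurable (PiM {1..<t} (\<lambda>_. S)) (prob_algebra N)"
    and p_meas: "\<And>t. t \<in> {1..T} \<Longrightarrow> p t \<in> borel_measurable (PiM {1..<t} (\<lambda>_. S) \<Otimes>\<^sub>M N)"
    and p_range: "\<And>t hx. t \<in> {1..T} \<Longrightarrow> hx \<in> space (PiM {1..<t} (\<lambda>_. S) \<Otimes>\<^sub>M N)
                    \<Longrightarrow> 0 \<le> p t hx \<and> p t hx \<le> 1"
    and s_range: "\<And>t x. t \<in> {1..T} \<Longrightarrow> x \<in> {0..1} \<Longrightarrow> 0 \<le> sf t x \<and> sf t x \<le> 1"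
    and s_deriv: "\<And>t x. t \<in> {1..T} \<Longrightarrow> x \<in> {0..1}
                    \<Longrightarrow> (sf t has_real_derivative sf' t x) (at x within {0..1})"
    and s_twice: "\<And>t x. t \<in> {1..T} \<Longrightarrow> x \<in> {0..1} \<Longrightarrow> sf' t differentiable (at x within {0..1})"
    and s'_nonzero: "\<And>t x. t \<in> {1..T} \<Longrightarrow> x \<in> {0..1} \<Longrightarrow> sf' t x \<noteq> 0"
    and s'_bounded: "\<And>t x. t \<in> {1..T} \<Longrightarrow> x \<in> {0..1} \<Longrightarrow> \<bar>sf' t x\<bar> \<le> Ds"
    and r_bounded: "\<And>t b \<omega>. t \<in> {1..T} \<Longrightarrow> \<omega> \<in> space (PiM {1..T} (\<lambda>_. S))
                    \<Longrightarrow> Qf sf abar p t b \<omega> \<le> C * propA p t b \<omega>"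
    and ph_meas: "\<And>t. t \<in> {1..T} \<Longrightarrow> ph t \<in> borel_measurable (PiM {1..<t} (\<lambda>_. S) \<Otimes>\<^sub>M N)"
    and ph_range: "\<And>t hx. t \<in> {1..T} \<Longrightarrow> hx \<in> space (PiM {1..<t} (\<lambda>_. S) \<Otimes>\<^sub>M N)
                    \<Longrightarrow> 0 \<le> ph t hx \<and> ph t hx \<le> 1"
    and rh_bounded: "\<And>t b \<omega>. t \<in> {1..T} \<Longrightarrow> \<omega> \<in> space (PiM {1..T} (\<lambda>_. S))
                    \<Longrightarrow> \<bar>rf sf abar ph t b \<omega>\<bar> \<le> Ch"
    and mh_meas: "\<And>t. t \<in> {1..T} \<Longrightarrow> mh t \<in> borel_measurable (PiM {1..t} (\<lambda>_. S))"
    and mh_bounded: "\<And>t h. t \<in> {1..T} \<Longrightarrow> h \<in> space (PiM {1..t} (\<lambda>_. S)) \<Longrightarrow> \<bar>mh t h\<bar> \<le> Bm"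
    and mh_T: "\<And>h. h \<in> space (PiM {1..T} (\<lambda>_. S)) \<Longrightarrow> mh T h = of_bool (snd (h T))"
  shows "\<forall>t<T. \<forall>h\<in>space (PiM {1..t} (\<lambda>_. S)).
     condE T \<kappa> p (Pstar T sf sf' abar p (mtrue T \<kappa> p sf abar) (Suc t)) t h
       = mtrue T \<kappa> p sf abar t h
   \<and> condE T \<kappa> p (\<lambda>\<omega>. Pstar T sf sf' abar ph mh (Suc t) \<omega> - mtrue T \<kappa> p sf abar t (prefix t \<omega>)) t h
       = (\<Sum>s\<in>{Suc t..T}. condE T \<kappa> p
            (\<lambda>\<omega>. (\<Prod>k\<in>{Suc t..<s}. rf sf abar ph k (snd (\<omega> k)) \<omega>)
                 * (mtrue T \<kappa> p sf abar s (prefix s \<omega>) - mh s (prefix s \<omega>))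
                 * (rf sf abar ph s (snd (\<omega> s)) \<omega> - rf sf abar p s (snd (\<omega> s)) \<omega>)) t h)
       + (\<Sum>s\<in>{Suc t..T}. condE T \<kappa> p
            (\<lambda>\<omega>. (\<Prod>k\<in>{Suc t..<s}. rf sf abar ph k (snd (\<omega> k)) \<omega>)
                 * (\<Sum>b\<in>UNIV. mh s (prefix s (setA s b \<omega>))
                      * (Qf sf abar ph s b \<omega> + phif sf sf' abar ph s b \<omega> - Qf sf abar p s b \<omega>))) t h)"
proof -
  have sf_cont: "continuous_on {0..1} (sf k)" if "k \<in> {1..T}" for k
    unfolding continuous_on_eq_continuous_within
    using s_deriv[OF that] by (blast intro: DERIV_continuous)
  have sf'_cont: "continuous_on {0..1} (sf' k)" if "k \<in> {1..T}" for k
    unfolding continuous_on_eq_continuous_within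
    using s_twice[OF that] by (blast intro: differentiable_imp_continuous_within)
  interpret estimation_setting T N \<kappa> p sf sf' abar C Ch Bm ph mh
    by unfold_locales
      (use kernel p_meas p_range sf_cont sf'_cont s_range r_bounded ph_meas ph_range rh_bounded
        mh_meas mh_bounded mh_T in \<open>simp_all add: S_def\<close>)
  show ?thesis
    unfolding S_def using condE_Pstar condE_Pstar_hat[unfolded ratio_prod_def] by blast
qed

end
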